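(* Let $(G_n)_{n\in\mathbb N}$ be a sequence of graphs with $\min_{v\in V}\delta_v=\omega(\log n)$, fix $p\in[0,1]$ and $k\ge 3$, and for every $n$ run the $(k,p,\mathcal B)$-Edge-Majority dynamics on $G_n$ from the initial configuration in which every node is in state $\mathcal R$. 1. (Slow disruption) If $p<p_k^\star$, then for every constant $\gamma>0$ and every $K>0$, $$\Pr\Big(\forall t\le n^K:\ \frac{\mathrm{vol}(R^{(t)})}{\mathrm{vol}(V)}\ge \varphi^+_{p,k}-\gamma\Big)=1-o(1),$$ and consequently $\Pr(\tau>n^K)=1-o(1)$ for every $K>0$. 2. (Fast disruption) If $p>p_k^\star$, then there is a constant $T=T(p,k)$ such that $\Pr(\tau<T)=1-o(1)$.
   Context: $G_n=(V,E)$ is a finite simple graph with $V=\{1,\dots,n\}$; $N(u)$ is the neighbourhood of $u$, $\delta_u=|N(u)|$ its degree, and $\mathrm{vol}(S)=\sum_{v\in S}\delta_v$. Asymptotic notation ($o(1)$, $\omega(\cdot)$) refers to $n\to\infty$. Each node has a state in $\{\mathcal R,\mathcal B\}$ at each round $t\in\mathbb N_0$; $R^{(t)}$ and $B^{(t)}$ are the sets of nodes in state $\mathcal R$ and $\mathcal B$ at round $t$. The $(k,p,\mathcal B)$-Edge-Majority dynamics: in each round $t\ge 1$, every node $u$ independently samples $k$ neighbours uniformly at random with replacement; for each sampled neighbour $v$, independently, $u$ "sees" $v$ in state $\mathcal B$ with probability $p$ and otherwise sees the true state of $v$ at round $t-1$; $u$ then takes at round $t$ the state it saw more often among the $k$ samples,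 ties broken uniformly at random. The time of disruption is $\tau=\inf\{t\ge0:\mathrm{vol}(B^{(t)})/\mathrm{vol}(V)>1/2\}$. For odd $k$ and $x\in[0,1]$ let $F_{p,k}(x)=\Pr[\mathrm{Bin}(k,(1-p)x)\ge (k+1)/2]$. For odd $k\ge3$, $p_k^\star\in[1/9,1/2)$ denotes the (unique) value such that: for $0\le p<p_k^\star$ the equation $F_{p,k}(x)=x$, $x\in[0,1]$, has exactly three solutions $0<\varphi^-_{p,k}<\varphi^+_{p,k}$; for $p=p_k^\star$ it has exactly two solutions; for $p>p_k^\star$ its only solution is $0$. For even $k$, $p_k^\star:=p_{k-1}^\star$ and $\varphi^+_{p,k}:=\varphi^+_{p,k-1}$. *)

theory Defs
  imports "HOL-Probability.Probability" "HOL-Library.Landau_Symbols"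
begin

text \<open>A graph on V = {1..n} is given by an adjacency predicate E (symmetric, irreflexive,
  edges only within V). A configuration maps nodes to bool: True = state B, False = state R.\<close>

definition simple_graph_on :: "nat \<Rightarrow> (nat \<Rightarrow> nat \<Rightarrow> bool) \<Rightarrow> bool" where
  "simple_graph_on n E \<longleftrightarrow>
     (\<forall>u v. E u v \<longrightarrow> E v u) \<and> (\<forall>u. \<not> E u u) \<and>
     (\<forall>u v. E u v \<longrightarrow> u \<in> {1..n} \<and> v \<in> {1..n})"

definition nbrs :: "(nat \<Rightarrow> nat \<Rightarrow> bool) \<Rightarrow> nat \<Rightarrow> nat set" where
  "nbrs E u = {v. E u v}"

definition deg :: "(nat \<Rightarrow> nat \<Rightarrow> bool) \<Rightarrow> nat \<Rightarrow> nat" where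
  "deg E u = card (nbrs E u)"

definition vol :: "(nat \<Rightarrow> nat \<Rightarrow> bool) \<Rightarrow> nat set \<Rightarrow> real" where
  "vol E S = (\<Sum>v\<in>S. real (deg E v))"

definition min_deg :: "nat \<Rightarrow> (nat \<Rightarrow> nat \<Rightarrow> bool) \<Rightarrow> nat" where
  "min_deg n E = Min (deg E ` {1..n})"

definition red_set :: "nat \<Rightarrow> (nat \<Rightarrow> bool) \<Rightarrow> nat set" where
  "red_set n x = {v \<in> {1..n}. \<not> x v}"

definition blue_set :: "nat \<Rightarrow> (nat \<Rightarrow> bool) \<Rightarrow> nat set" where
  "blue_set n x = {v \<in> {1..n}. x v}"

definition sample_one :: "(nat \<Rightarrow> nat \<Rightarrow> bool) \<Rightarrow> real \<Rightarrow> (nat \<Rightarrow> bool) \<Rightarrow> nat \<Rightarrow> bool pmf" where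
  "sample_one E p x u =
     do { v \<leftarrow> pmf_of_set (nbrs E u); c \<leftarrow> bernoulli_pmf p; return_pmf (c \<or> x v) }"

fun count_B :: "(nat \<Rightarrow> nat \<Rightarrow> bool) \<Rightarrow> real \<Rightarrow> (nat \<Rightarrow> bool) \<Rightarrow> nat \<Rightarrow> nat \<Rightarrow> nat pmf" where
  "count_B E p x u 0 = return_pmf 0"
| "count_B E p x u (Suc m) =
     do { c \<leftarrow> count_B E p x u m; b \<leftarrow> sample_one E p x u; return_pmf (if b then Suc c else c) }"

definition node_update :: "(nat \<Rightarrow> nat \<Rightarrow> bool) \<Rightarrow> nat \<Rightarrow> real \<Rightarrow> (nat \<Rightarrow> bool) \<Rightarrow> nat \<Rightarrow> bool pmf" where
  "node_update E k p x u =
     do { c \<leftarrow> count_B E p x u k;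
          if 2 * c > k then return_pmf True
          else if 2 * c < k then return_pmf False
          else bernoulli_pmf (1/2) }"

text \<open>One round: all nodes of V = {1..n} update independently (nodes outside V stay False).\<close>
definition em_step :: "nat \<Rightarrow> (nat \<Rightarrow> nat \<Rightarrow> bool) \<Rightarrow> nat \<Rightarrow> real \<Rightarrow> (nat \<Rightarrow> bool) \<Rightarrow> (nat \<Rightarrow> bool) pmf" where
  "em_step n E k p x = Pi_pmf {1..n} False (node_update E k p x)"

text \<open>Law of the trajectory (x^(0), ..., x^(T)) as a list of length T+1.\<close>
fun em_traj :: "nat \<Rightarrow> (nat \<Rightarrow> nat \<Rightarrow> bool) \<Rightarrow> nat \<Rightarrow> real \<Rightarrow> (nat \<Rightarrow> bool) \<Rightarrow> nat \<Rightarrow> (nat \<Rightarrow> bool) list pmf" where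
  "em_traj n E k p x0 0 = return_pmf [x0]"
| "em_traj n E k p x0 (Suc T) =
     do { xs \<leftarrow> em_traj n E k p x0 T; y \<leftarrow> em_step n E k p (last xs); return_pmf (xs @ [y]) }"

definition F_pk :: "real \<Rightarrow> nat \<Rightarrow> real \<Rightarrow> real" where
  "F_pk p k x = measure_pmf.prob (binomial_pmf k ((1 - p) * x)) {j. 2 * j \<ge> k + 1}"

definition fixpts :: "real \<Rightarrow> nat \<Rightarrow> real set" where
  "fixpts p k = {x \<in> {0..1}. F_pk p k x = x}"

definition p_star_odd :: "nat \<Rightarrow> real" where
  "p_star_odd k = (THE ps. 1/9 \<le> ps \<and> ps < 1/2 \<and>
       (\<forall>p. 0 \<le> p \<and> p < ps \<longrightarrow> card (fixpts p k) = 3) \<and>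
       card (fixpts ps k) = 2 \<and>
       (\<forall>p. ps < p \<and> p \<le> 1 \<longrightarrow> fixpts p k = {0}))"

definition p_star :: "nat \<Rightarrow> real" where
  "p_star k = (if odd k then p_star_odd k else p_star_odd (k - 1))"

definition phi_plus :: "real \<Rightarrow> nat \<Rightarrow> real" where
  "phi_plus p k = (if odd k then Max (fixpts p k) else Max (fixpts p (k - 1)))"

end

(* A neighbour v of u, whose red fraction is r, turns red in the next round with probability
   F(r) = F_pk p k r: its k samples are i.i.d. Bernoulli, so this is a binomial majority, and for
   even k = 2m+2 the fair tie-break gives the same law as k - 1 = 2m+1 samples.  Given the current
   configuration these events are independent, so by Hoeffding's inequality the new red fraction
   of u deviates from the average of the F(r_v) by more than eps with probability exp(-2 eps^2 deg u).
   As every degree is omega(log n), a union bound over all n nodes and polynomially many rounds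
   shows that w.h.p. all red fractions follow r |-> F(r) up to eps.  If p < p*, some a arbitrarily
   close to phi+ satisfies F(a) > a, so "every red fraction is at least a" persists for n^K rounds.
   If p > p*, F(x) < x on (0,1], with a uniform gap on [1/2,1], so the red fractions are pushed
   below 1/2 after a bounded number of rounds.  Both facts, and the value p* = 1 - 1/M, come from
   the unimodality of G(q)/q, where G(q) = P(Bin(2m+1,q) > m) and M = max G(q)/q. *)

theory Submission
  imports Defs
begin

section \<open>Binomial majority probabilities\<close>

definition Bernstein_tail :: "nat \<Rightarrow> nat \<Rightarrow> real \<Rightarrow> real" where
  "Bernstein_tail n a q = (\<Sum>j=a..n. Bernstein n j q)"

lemma Bernstein_eq_0: "n < j \<Longrightarrow> Bernstein n j q = 0"
  by (simp add: Bernstein_def)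

lemma Bernstein_reflect: "j \<le> n \<Longrightarrow> Bernstein n j (1 - q) = Bernstein n (n - j) q"
  by (simp add: Bernstein_def binomial_symmetric[symmetric] mult.commute)

lemma has_real_derivative_Bernstein:
  assumes "1 \<le> j" "j \<le> n"
  shows "DERIV (Bernstein n j) q :> real n * (Bernstein (n-1) (j-1) q - Bernstein (n-1) j q)"
proof -
  have d: "DERIV (Bernstein n j) q :>
      real (n choose j) * (real j * q^(j-1)) * (1-q)^(n-j)
      - real (n choose j) * q^j * (real (n-j) * (1-q)^(n-j-1))"
    unfolding Bernstein_def[abs_def] by (rule derivative_eq_intros refl)+ simp
  have c1: "real (n choose j) * real j = real n * real ((n-1) choose (j-1))"
    using times_binomial_minus1_eq[of j n] assms by (metis of_nat_mult mult.commute less_le_trans zero_less_one)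
  have c2: "real (n choose j) * real (n-j) = real n * real ((n-1) choose j)"
    using binomial_absorb_comp[of n j] by (metis of_nat_mult mult.commute)
  have e: "n - 1 - (j - 1) = n - j" "n - 1 - j = n - j - 1"
    using assms by simp_all
  have "real (n choose j) * (real j * q^(j-1)) * (1-q)^(n-j)
      - real (n choose j) * q^j * (real (n-j) * (1-q)^(n-j-1))
    = (real (n choose j) * real j) * q^(j-1) * (1-q)^(n-j)
      - (real (n choose j) * real (n-j)) * q^j * (1-q)^(n-j-1)"
    by (simp add: algebra_simps)
  also have "\<dots> = real n * (Bernstein (n-1) (j-1) q - Bernstein (n-1) j q)"
    unfolding c1 c2 Bernstein_def e by (simp add: algebra_simps)
  finally show ?thesis using d by simp
qed

lemma has_real_derivative_Bernstein_tail:
  assumes "1 \<le> a"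
  shows "DERIV (Bernstein_tail n a) q :> real n * Bernstein (n-1) (a-1) q"
  using assms
proof (induction "n + 1 - a" arbitrary: a)
  case 0
  then have "Bernstein_tail n a = (\<lambda>_. 0)" and "real n * Bernstein (n-1) (a-1) q = 0"
    by (auto simp: Bernstein_tail_def fun_eq_iff) (cases n; simp add: Bernstein_eq_0)
  then show ?case by (metis DERIV_const)
next
  case (Suc d)
  then have "Bernstein_tail n a = (\<lambda>q. Bernstein n a q + Bernstein_tail n (Suc a) q)"
    by (auto simp: Bernstein_tail_def fun_eq_iff sum.atLeast_Suc_atMost)
  moreover have "DERIV (Bernstein_tail n (Suc a)) q :> real n * Bernstein (n-1) a q"
    using Suc.hyps(1)[of "Suc a"] Suc.hyps(2) by simp
  then have "DERIV (\<lambda>q. Bernstein n a q + Bernstein_tail n (Suc a) q) q :>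
      real n * (Bernstein (n-1) (a-1) q - Bernstein (n-1) a q) + real n * Bernstein (n-1) a q"
    using Suc by (intro DERIV_add has_real_derivative_Bernstein) auto
  ultimately show ?case by (simp add: algebra_simps)
qed

lemma Bernstein_tail_0: "1 \<le> a \<Longrightarrow> Bernstein_tail n a 0 = 0"
  by (simp add: Bernstein_tail_def Bernstein_def)

lemma Bernstein_tail_1:
  assumes "a \<le> n"
  shows "Bernstein_tail n a 1 = 1"
proof -
  have "Bernstein n j 1 = (if j = n then 1 else 0)" for j
    by (auto simp: Bernstein_def)
  then show ?thesis
    using assms by (simp add: Bernstein_tail_def)
qed

lemma Bernstein_tail_le_1:
  assumes "0 \<le> q" "q \<le> 1"
  shows "Bernstein_tail n a q \<le> 1"
proof -
  have "Bernstein_tail n a q \<le> (\<Sum>j\<le>n. Bernstein n j q)"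
    unfolding Bernstein_tail_def by (rule sum_mono2) (auto intro: Bernstein_nonneg assms)
  then show ?thesis by simp
qed

lemma sum_Bernstein_atMost_reflect:
  assumes "a \<le> n"
  shows "(\<Sum>j\<le>a. Bernstein n j q) = Bernstein_tail n (n - a) (1 - q)"
  unfolding Bernstein_tail_def
proof (rule sum.reindex_bij_witness[of _ "\<lambda>j. n - j" "\<lambda>j. n - j"])
  fix j assume "j \<in> {..a}"
  then show "Bernstein n (n - j) (1 - q) = Bernstein n j q"
    using Bernstein_reflect[of "n - j" n q] assms by simp
qed (use assms in \<open>auto simp: atLeastAtMost_iff\<close>)

lemma sum_Bernstein_atMost_add_tail:
  assumes "a \<le> n"
  shows "(\<Sum>j\<le>a. Bernstein n j q) + Bernstein_tail n (Suc a) q = 1"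
proof -
  have "{..n} = {..a} \<union> {Suc a..n}" using assms by auto
  then have "(\<Sum>j\<le>n. Bernstein n j q) = (\<Sum>j\<le>a. Bernstein n j q) + Bernstein_tail n (Suc a) q"
    unfolding Bernstein_tail_def by (subst sum.union_disjoint[symmetric]) auto
  then show ?thesis by simp
qed

definition majority_prob :: "nat \<Rightarrow> real \<Rightarrow> real" where
  "majority_prob m q = Bernstein_tail (2*m+1) (m+1) q"

definition majority_deriv :: "nat \<Rightarrow> real \<Rightarrow> real" where
  "majority_deriv m q = real (2*m+1) * real ((2*m) choose m) * (q * (1 - q)) ^ m"

lemma has_real_derivative_majority_prob: "DERIV (majority_prob m) q :> majority_deriv m q"
proof -
  have "DERIV (Bernstein_tail (2*m+1) (m+1)) q :> real (2*m+1) * Bernstein (2*m+1-1) (m+1-1) q"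
    by (rule has_real_derivative_Bernstein_tail) simp
  moreover have "real (2*m+1) * Bernstein (2*m+1-1) (m+1-1) q = majority_deriv m q"
    by (simp add: Bernstein_def majority_deriv_def power_mult_distrib)
  ultimately show ?thesis unfolding majority_prob_def[abs_def] by simp
qed

lemma continuous_on_majority_prob: "continuous_on S (majority_prob m)"
  by (meson DERIV_isCont continuous_at_imp_continuous_on has_real_derivative_majority_prob)

lemma majority_deriv_pos: "0 < q \<Longrightarrow> q < 1 \<Longrightarrow> 0 < majority_deriv m q"
  by (simp add: majority_deriv_def)

lemma majority_prob_strict_mono:
  assumes "0 \<le> x" "x < y" "y \<le> 1"
  shows "majority_prob m x < majority_prob m y"
proof (rule DERIV_pos_imp_increasing_open[OF assms(2) _ continuous_on_majority_prob])
  fix t assume "x < t" "t < y"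
  then show "\<exists>d. DERIV (majority_prob m) t :> d \<and> 0 < d"
    using assms majority_deriv_pos has_real_derivative_majority_prob by force
qed

lemma majority_prob_mono: "0 \<le> x \<Longrightarrow> x \<le> y \<Longrightarrow> y \<le> 1 \<Longrightarrow> majority_prob m x \<le> majority_prob m y"
  using majority_prob_strict_mono[of x y m] by (cases "x = y") auto

lemma majority_prob_0 [simp]: "majority_prob m 0 = 0"
  by (simp add: majority_prob_def Bernstein_tail_0)

lemma majority_prob_1 [simp]: "majority_prob m 1 = 1"
  by (simp add: majority_prob_def Bernstein_tail_1)

lemma majority_prob_le_1: "0 \<le> q \<Longrightarrow> q \<le> 1 \<Longrightarrow> majority_prob m q \<le> 1"
  by (simp add: majority_prob_def Bernstein_tail_le_1)

lemma majority_prob_reflect: "majority_prob m (1 - q) = 1 - majority_prob m q"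
  using sum_Bernstein_atMost_reflect[of m "2*m+1" q] sum_Bernstein_atMost_add_tail[of m "2*m+1" q]
  by (simp add: majority_prob_def)

lemma majority_prob_half [simp]: "majority_prob m (1/2) = 1/2"
  using majority_prob_reflect[of m "1/2"] by simp

lemma central_binomial_identities:
  "real (Suc (Suc (2*m)) choose Suc m) = 2 * real ((2*m+1) choose m)"
  "real (2*m+1) * real ((2*m) choose m) = real (m+1) * real ((2*m+1) choose m)"
proof -
  have s: "(2*m+1) choose (m+1) = (2*m+1) choose m"
    using binomial_symmetric[of m "2*m+1"] by simp
  then show "real (Suc (Suc (2*m)) choose Suc m) = 2 * real ((2*m+1) choose m)"
    by simp
  have "Suc m * (Suc (2*m) choose Suc m) = Suc (2*m) * ((2*m) choose m)"
    by (rule Suc_times_binomial)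
  then show "real (2*m+1) * real ((2*m) choose m) = real (m+1) * real ((2*m+1) choose m)"
    using s by (metis Suc_eq_plus1 of_nat_mult)
qed

lemma has_real_derivative_majority_step:
  "DERIV (\<lambda>q. real ((2*m+1) choose m) * (q * (1 - q)) ^ (m+1) * (2*q - 1)) q :>
     majority_deriv (Suc m) q - majority_deriv m q"
proof -
  define c where "c = real ((2*m+1) choose m)"
  define W where "W = (q * (1 - q)) ^ m"
  have "DERIV (\<lambda>q. c * (q * (1 - q)) ^ (m+1) * (2*q - 1)) q :>
      c * (real (m+1) * W * (1 - 2*q)) * (2*q - 1) + c * (q * (1 - q) * W) * 2"
    unfolding W_def by (rule derivative_eq_intros refl)+ (simp add: algebra_simps)
  also have "c * (real (m+1) * W * (1 - 2*q)) * (2*q - 1) + c * (q * (1 - q) * W) * 2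
      = real (2 * Suc m + 1) * (2 * c) * (q * (1 - q) * W) - real (m+1) * c * W"
    by (simp add: algebra_simps)
  also have "\<dots> = majority_deriv (Suc m) q - majority_deriv m q"
    unfolding majority_deriv_def W_def c_def
    using central_binomial_identities(2)[of m]
    by (simp add: central_binomial_identities(1) del: binomial_Suc_Suc)
  finally show ?thesis unfolding c_def .
qed

lemma majority_prob_Suc:
  "majority_prob (Suc m) q - majority_prob m q = real ((2*m+1) choose m) * (q * (1 - q)) ^ (m+1) * (2*q - 1)"
proof -
  define D where "D = (\<lambda>q. majority_prob (Suc m) q - majority_prob m q
      - real ((2*m+1) choose m) * (q * (1 - q)) ^ (m+1) * (2*q - 1))"
  have "DERIV D x :> 0" for x
    using DERIV_diff[OF DERIV_diff[OF has_real_derivative_majority_prob[of "Suc m" x]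
        has_real_derivative_majority_prob[of m x]] has_real_derivative_majority_step[of m x]]
    unfolding D_def by simp
  then have "D q = D 0" by (intro DERIV_isconst_all) blast
  then show ?thesis by (simp add: D_def)
qed

lemma majority_prob_three_quarters: "1 \<le> m \<Longrightarrow> 27/32 \<le> majority_prob m (3/4)"
proof (induction m rule: dec_induct)
  case base
  show ?case by (simp add: majority_prob_def Bernstein_tail_def Bernstein_def numeral_eq_Suc)
next
  case (step m)
  have "0 \<le> majority_prob (Suc m) (3/4) - majority_prob m (3/4)"
    unfolding majority_prob_Suc by simp
  with step show ?case by simp
qed

section \<open>Unimodality of the majority ratio\<close>

definition majority_ratio :: "nat \<Rightarrow> real \<Rightarrow> real" where
  "majority_ratio m q = majority_prob m q / q"

definition majority_ratio_numer :: "nat \<Rightarrow> real \<Rightarrow> real" where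
  "majority_ratio_numer m q = q * majority_deriv m q - majority_prob m q"

lemma has_real_derivative_majority_ratio:
  "q \<noteq> 0 \<Longrightarrow> DERIV (majority_ratio m) q :> majority_ratio_numer m q / q\<^sup>2"
  unfolding majority_ratio_def[abs_def] majority_ratio_numer_def
  by (rule derivative_eq_intros has_real_derivative_majority_prob refl | assumption)+
     (simp add: power2_eq_square algebra_simps)

lemma continuous_on_majority_ratio: "0 < a \<Longrightarrow> continuous_on {a..b} (majority_ratio m)"
  unfolding majority_ratio_def by (intro continuous_intros continuous_on_majority_prob) auto

lemma has_real_derivative_majority_ratio_numer:
  "DERIV (majority_ratio_numer m) q :>
     q * (real (2*m+1) * real ((2*m) choose m) * (real m * (q * (1 - q)) ^ (m - 1) * (1 - 2 * q)))"
  unfolding majority_ratio_numer_def[abs_def] majority_deriv_def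
  by (rule derivative_eq_intros has_real_derivative_majority_prob[unfolded majority_deriv_def] refl)+
     (simp add: algebra_simps)

lemma majority_ratio_numer_strict_mono:
  assumes "1 \<le> m" "0 \<le> x" "x < y" "y \<le> 1/2"
  shows "majority_ratio_numer m x < majority_ratio_numer m y"
proof (rule DERIV_pos_imp_increasing_open[OF assms(3)])
  fix t assume "x < t" "t < y"
  with assms show "\<exists>d. DERIV (majority_ratio_numer m) t :> d \<and> 0 < d"
    using has_real_derivative_majority_ratio_numer by (fastforce intro!: mult_pos_pos)
qed (meson DERIV_isCont continuous_at_imp_continuous_on has_real_derivative_majority_ratio_numer)

lemma majority_ratio_numer_strict_antimono:
  assumes "1 \<le> m" "1/2 \<le> x" "x < y" "y \<le> 1"
  shows "majority_ratio_numer m y < majority_ratio_numer m x"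
proof (rule DERIV_neg_imp_decreasing_open[OF assms(3)])
  fix t assume "x < t" "t < y"
  with assms have "0 < t * (real (2*m+1) * real ((2*m) choose m) * (real m * (t * (1 - t)) ^ (m - 1) * (2 * t - 1)))"
    by (intro mult_pos_pos) auto
  then show "\<exists>d. DERIV (majority_ratio_numer m) t :> d \<and> d < 0"
    using has_real_derivative_majority_ratio_numer by (fastforce simp: algebra_simps)
qed (meson DERIV_isCont continuous_at_imp_continuous_on has_real_derivative_majority_ratio_numer)

text \<open>The derivative of \<open>majority_ratio_numer m\<close> is \<open>q\<close> times the second derivative of
  \<open>majority_prob m\<close>, which is positive below \<open>1/2\<close> and negative above; as the numerator is \<open>0\<close>
  at \<open>0\<close> and \<open>-1\<close> at \<open>1\<close>, it changes sign exactly once.\<close>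
lemma majority_ratio_numer_sign:
  assumes "1 \<le> m"
  obtains q0 where "1/2 < q0" "q0 < 1"
    "\<And>q. 0 < q \<Longrightarrow> q < q0 \<Longrightarrow> 0 < majority_ratio_numer m q"
    "\<And>q. q0 < q \<Longrightarrow> q \<le> 1 \<Longrightarrow> majority_ratio_numer m q < 0"
proof -
  have "majority_ratio_numer m 0 = 0" "majority_ratio_numer m 1 = -1"
    using assms by (simp_all add: majority_ratio_numer_def majority_deriv_def)
  moreover have half: "0 < majority_ratio_numer m (1/2)"
    using majority_ratio_numer_strict_mono[of m 0 "1/2"] assms calculation by simp
  moreover have "continuous_on {1/2..1} (majority_ratio_numer m)"
    by (meson DERIV_isCont continuous_at_imp_continuous_on has_real_derivative_majority_ratio_numer)
  ultimately obtain q0 where q0: "1/2 \<le> q0" "q0 \<le> 1" "majority_ratio_numer m q0 = 0"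
    using IVT2'[of "majority_ratio_numer m" 1 0 "1/2"] by auto
  show ?thesis
  proof
    show "1/2 < q0"
      using q0 half by (cases "q0 = 1/2") auto
    show "q0 < 1"
      using q0 \<open>majority_ratio_numer m 1 = -1\<close> by (cases "q0 = 1") auto
    show "0 < majority_ratio_numer m q" if "0 < q" "q < q0" for q
      using majority_ratio_numer_strict_mono[of m 0 q] majority_ratio_numer_strict_antimono[of m q q0]
        that assms q0 \<open>majority_ratio_numer m 0 = 0\<close> by (cases "q \<le> 1/2") auto
    show "majority_ratio_numer m q < 0" if "q0 < q" "q \<le> 1" for q
      using majority_ratio_numer_strict_antimono[of m q0 q] that assms q0 \<open>1/2 < q0\<close> by simp
  qed
qed

lemma majority_ratio_unimodal:
  assumes "1 \<le> m"
  obtains q0 where "1/2 < q0" "q0 < 1"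
    "\<And>x y. 0 < x \<Longrightarrow> x < y \<Longrightarrow> y \<le> q0 \<Longrightarrow> majority_ratio m x < majority_ratio m y"
    "\<And>x y. q0 \<le> x \<Longrightarrow> x < y \<Longrightarrow> y \<le> 1 \<Longrightarrow> majority_ratio m y < majority_ratio m x"
proof -
  obtain q0 where q0: "1/2 < q0" "q0 < 1"
    and pos: "\<And>q. 0 < q \<Longrightarrow> q < q0 \<Longrightarrow> 0 < majority_ratio_numer m q"
    and neg: "\<And>q. q0 < q \<Longrightarrow> q \<le> 1 \<Longrightarrow> majority_ratio_numer m q < 0"
    using majority_ratio_numer_sign[OF assms] by blast
  show ?thesis
  proof (rule that[OF q0])
    fix x y :: real assume xy: "0 < x" "x < y" "y \<le> q0"
    show "majority_ratio m x < majority_ratio m y"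
    proof (rule DERIV_pos_imp_increasing_open[OF xy(2) _ continuous_on_majority_ratio[OF xy(1)]])
      fix t assume "x < t" "t < y"
      then show "\<exists>d. DERIV (majority_ratio m) t :> d \<and> 0 < d"
        using xy pos[of t] has_real_derivative_majority_ratio[of t m] by force
    qed
  next
    fix x y :: real assume xy: "q0 \<le> x" "x < y" "y \<le> 1"
    have "0 < x" using xy q0 by simp
    show "majority_ratio m y < majority_ratio m x"
    proof (rule DERIV_neg_imp_decreasing_open[OF xy(2) _ continuous_on_majority_ratio[OF \<open>0 < x\<close>]])
      fix t assume "x < t" "t < y"
      then show "\<exists>d. DERIV (majority_ratio m) t :> d \<and> d < 0"
        using xy q0 neg[of t] has_real_derivative_majority_ratio[of t m]
        by (force simp: divide_neg_pos)
    qed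
  qed
qed

section \<open>Fixed points of the majority map and the threshold\<close>

lemma F_pk_eq_majority_prob:
  assumes "0 \<le> p" "p \<le> 1" "0 \<le> x" "x \<le> 1"
  shows "F_pk p (2*m+1) x = majority_prob m ((1 - p) * x)"
proof -
  define q where "q = (1 - p) * x"
  have q: "0 \<le> q" "q \<le> 1" using assms unfolding q_def by (auto intro: mult_le_one)
  let ?B = "binomial_pmf (2*m+1) q"
  have "set_pmf ?B \<subseteq> {..2*m+1}"
    using q by (auto simp: set_pmf_binomial_eq split: if_splits)
  then have "{j. 2 * j \<ge> 2*m+1 + 1} \<inter> set_pmf ?B = {m+1..2*m+1} \<inter> set_pmf ?B"
    by auto
  then have "measure_pmf.prob ?B {j. 2 * j \<ge> 2*m+1 + 1} = measure_pmf.prob ?B {m+1..2*m+1}"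
    by (metis measure_Int_set_pmf)
  also have "\<dots> = (\<Sum>j=m+1..2*m+1. pmf ?B j)"
    by (rule measure_measure_pmf_finite) simp
  also have "\<dots> = majority_prob m q"
    using q by (simp add: majority_prob_def Bernstein_tail_def Bernstein_def)
  finally show ?thesis unfolding F_pk_def q_def .
qed

lemma fixpts_odd_eq:
  "0 \<le> p \<Longrightarrow> p \<le> 1 \<Longrightarrow> fixpts p (2*m+1) = {x\<in>{0..1}. majority_prob m ((1 - p) * x) = x}"
  unfolding fixpts_def using F_pk_eq_majority_prob by auto

lemma F_pk_mono:
  assumes "0 \<le> p" "p \<le> 1" "0 \<le> x" "x \<le> y" "y \<le> 1"
  shows "F_pk p (2*m+1) x \<le> F_pk p (2*m+1) y"
  using assms F_pk_eq_majority_prob[of p x m] F_pk_eq_majority_prob[of p y m]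
  by (auto intro!: majority_prob_mono mult_left_mono mult_le_one)

lemma F_pk_nonneg: "0 \<le> F_pk p k x"
  by (simp add: F_pk_def)

lemma F_pk_le_1: "F_pk p k x \<le> 1"
  by (simp add: F_pk_def)

lemma continuous_on_F_pk:
  assumes "0 \<le> p" "p \<le> 1"
  shows "continuous_on {0..1} (F_pk p (2*m+1))"
proof -
  have "continuous_on {0..1} (\<lambda>x. majority_prob m ((1 - p) * x))"
    by (intro continuous_on_compose2[OF continuous_on_majority_prob[of UNIV]] continuous_intros) auto
  then show ?thesis
    by (rule continuous_on_cong[THEN iffD1, rotated 2]) (use F_pk_eq_majority_prob assms in auto)
qed

text \<open>The nonzero fixed points of \<open>x \<mapsto> majority_prob m (a * x)\<close> are the solutions of
  \<open>majority_ratio m (a * x) = 1 / a\<close>, so they are governed by the single peak of the ratio at \<open>q0\<close>.\<close>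
locale majority_peak =
  fixes m :: nat and q0 :: real
  assumes m_pos: "1 \<le> m"
    and peak_bounds: "1/2 < q0" "q0 < 1"
    and ratio_increasing: "\<And>x y. 0 < x \<Longrightarrow> x < y \<Longrightarrow> y \<le> q0 \<Longrightarrow> majority_ratio m x < majority_ratio m y"
    and ratio_decreasing: "\<And>x y. q0 \<le> x \<Longrightarrow> x < y \<Longrightarrow> y \<le> 1 \<Longrightarrow> majority_ratio m y < majority_ratio m x"
begin

abbreviation peak_ratio :: real where
  "peak_ratio \<equiv> majority_ratio m q0"

lemma ratio_le_peak: "0 < q \<Longrightarrow> q \<le> 1 \<Longrightarrow> majority_ratio m q \<le> peak_ratio"
  using ratio_increasing[of q q0] ratio_decreasing[of q0 q] by (cases q q0 rule: linorder_cases) auto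

lemma ratio_eq_peak_imp: "0 < q \<Longrightarrow> q \<le> 1 \<Longrightarrow> majority_ratio m q = peak_ratio \<Longrightarrow> q = q0"
  using ratio_increasing[of q q0] ratio_decreasing[of q0 q] by (cases q q0 rule: linorder_cases) auto

lemma ratio_inj_left:
  "0 < x \<Longrightarrow> x \<le> q0 \<Longrightarrow> 0 < y \<Longrightarrow> y \<le> q0 \<Longrightarrow> majority_ratio m x = majority_ratio m y \<Longrightarrow> x = y"
  using ratio_increasing[of x y] ratio_increasing[of y x] by (cases x y rule: linorder_cases) auto

lemma ratio_inj_right:
  "q0 \<le> x \<Longrightarrow> x \<le> 1 \<Longrightarrow> q0 \<le> y \<Longrightarrow> y \<le> 1 \<Longrightarrow> majority_ratio m x = majority_ratio m y \<Longrightarrow> x = y"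
  using ratio_decreasing[of x y] ratio_decreasing[of y x] by (cases x y rule: linorder_cases) auto

lemma peak_ratio_ge: "9/8 \<le> peak_ratio"
proof -
  have "9/8 \<le> majority_ratio m (3/4)"
    using majority_prob_three_quarters[OF m_pos] by (simp add: majority_ratio_def)
  also have "\<dots> \<le> peak_ratio"
    by (rule ratio_le_peak) auto
  finally show ?thesis .
qed

lemma q0_le_inv_peak_ratio: "q0 \<le> 1 / peak_ratio"
  using majority_prob_le_1[of q0 m] peak_bounds peak_ratio_ge by (simp add: majority_ratio_def field_simps)

lemma peak_ratio_lt_2: "peak_ratio < 2"
proof -
  have "peak_ratio / 2 < q0 * peak_ratio"
    using peak_bounds peak_ratio_ge by simp
  also have "\<dots> \<le> 1"
    using q0_le_inv_peak_ratio peak_ratio_ge by (simp add: field_simps)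
  finally show ?thesis by simp
qed

lemma inv_peak_ratio_bounds: "0 < 1 / peak_ratio" "1 / peak_ratio < 1"
  using peak_ratio_ge by simp_all

lemma scaled_fixpoint_iff:
  "0 < a \<Longrightarrow> 0 < x \<Longrightarrow> majority_prob m (a * x) = x \<longleftrightarrow> majority_ratio m (a * x) = 1 / a"
  by (auto simp: majority_ratio_def field_simps)

lemma ratio_level_points:
  assumes "1 \<le> c" "c < peak_ratio"
  obtains q1 q2 where "1/2 \<le> q1" "q1 < q0" "q0 < q2" "q2 \<le> 1"
    "majority_ratio m q1 = c" "majority_ratio m q2 = c"
proof -
  have "majority_ratio m (1/2) = 1" "majority_ratio m 1 = 1"
    by (simp_all add: majority_ratio_def)
  moreover have "continuous_on {1/2..q0} (majority_ratio m)" "continuous_on {q0..1} (majority_ratio m)"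
    using peak_bounds by (auto intro!: continuous_on_majority_ratio)
  ultimately obtain q1 q2 where q1: "1/2 \<le> q1" "q1 \<le> q0" "majority_ratio m q1 = c"
      and q2: "q0 \<le> q2" "q2 \<le> 1" "majority_ratio m q2 = c"
    using IVT'[of "majority_ratio m" "1/2" c q0] IVT2'[of "majority_ratio m" 1 c q0] assms peak_bounds
    by auto
  moreover have "q1 \<noteq> q0" "q2 \<noteq> q0" using q1 q2 assms by auto
  ultimately show ?thesis using that[of q1 q2] by linarith
qed

lemma scaled_fixpts_eq_level_points:
  assumes a: "0 < a" "a \<le> 1" and q1: "0 < q1" "q1 \<le> q0" "majority_ratio m q1 = 1 / a"
    and q2: "q0 \<le> q2" "q2 \<le> 1" "majority_ratio m q2 = 1 / a"
  shows "{x\<in>{0..1}. majority_prob m (a * x) = x} = {0, q1 / a, q2 / a}"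
proof (intro equalityI subsetI)
  fix x assume x: "x \<in> {x\<in>{0..1}. majority_prob m (a * x) = x}"
  show "x \<in> {0, q1 / a, q2 / a}"
  proof (cases "x = 0")
    case False
    then have "0 < x" using x by auto
    then have e: "majority_ratio m (a * x) = 1 / a" and ax: "0 < a * x" "a * x \<le> 1"
      using scaled_fixpoint_iff[OF a(1)] x a by (auto intro: mult_le_one)
    then have "a * x = q1 \<or> a * x = q2"
      using ratio_inj_left[of "a * x" q1] ratio_inj_right[of "a * x" q2] ax q1 q2 e peak_bounds
      by (cases "a * x \<le> q0") auto
    then show ?thesis using a by (auto simp: field_simps)
  qed simp
next
  fix x assume "x \<in> {0, q1 / a, q2 / a}"
  moreover have G: "majority_prob m q1 = q1 / a" "majority_prob m q2 = q2 / a"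
    using q1 q2 peak_bounds by (auto simp: majority_ratio_def field_simps)
  moreover have "q1 / a \<le> 1" "q2 / a \<le> 1"
    using G majority_prob_le_1[of q1 m] majority_prob_le_1[of q2 m] q1 q2 peak_bounds by simp_all
  ultimately show "x \<in> {x\<in>{0..1}. majority_prob m (a * x) = x}"
    using a q1 q2 peak_bounds by auto
qed

lemma fixpts_scaled_gt:
  assumes "1 / peak_ratio < a" "a \<le> 1"
  obtains x1 x2 where "{x\<in>{0..1}. majority_prob m (a * x) = x} = {0, x1, x2}"
    "0 < x1" "x1 < x2" "q0 / a < x2" "x2 \<le> 1"
    "\<And>x. q0 / a < x \<Longrightarrow> x < x2 \<Longrightarrow> x < majority_prob m (a * x)"
proof -
  have a_pos: "0 < a" using assms inv_peak_ratio_bounds by linarith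
  have "1 \<le> 1 / a" "1 / a < peak_ratio"
    using assms a_pos peak_ratio_ge by (simp_all add: field_simps)
  then obtain q1 q2 where q1: "1/2 \<le> q1" "q1 < q0" "majority_ratio m q1 = 1 / a"
    and q2: "q0 < q2" "q2 \<le> 1" "majority_ratio m q2 = 1 / a"
    by (rule ratio_level_points) blast
  have "q2 / a = majority_prob m q2"
    using q2 peak_bounds by (simp add: majority_ratio_def field_simps)
  then have "q2 / a \<le> 1"
    using majority_prob_le_1[of q2 m] q2 peak_bounds by simp
  show ?thesis
  proof
    show "{x\<in>{0..1}. majority_prob m (a * x) = x} = {0, q1 / a, q2 / a}"
      using q1 q2 a_pos assms(2) by (intro scaled_fixpts_eq_level_points) auto
    show "0 < q1 / a" "q1 / a < q2 / a" "q0 / a < q2 / a" "q2 / a \<le> 1"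
      using q1 q2 a_pos peak_bounds \<open>q2 / a \<le> 1\<close> by (auto simp: divide_strict_right_mono)
    fix x assume "q0 / a < x" "x < q2 / a"
    then have ax: "q0 < a * x" "a * x < q2" using a_pos by (auto simp: field_simps)
    then have "1 / a < majority_prob m (a * x) / (a * x)"
      using ratio_decreasing[of "a * x" q2] q2 by (simp add: majority_ratio_def)
    then show "x < majority_prob m (a * x)"
      using ax peak_bounds a_pos by (simp add: field_simps)
  qed
qed

lemma fixpts_scaled_eq: "{x\<in>{0..1}. majority_prob m (x / peak_ratio) = x} = {0, q0 * peak_ratio}"
proof (intro equalityI subsetI)
  fix x assume x: "x \<in> {x\<in>{0..1}. majority_prob m (x / peak_ratio) = x}"
  show "x \<in> {0, q0 * peak_ratio}"
  proof (cases "x = 0")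
    case False
    then have "0 < x / peak_ratio" "x / peak_ratio \<le> 1"
      using x peak_ratio_ge by auto
    moreover have "majority_ratio m (x / peak_ratio) = peak_ratio"
      using x False peak_ratio_ge by (simp add: majority_ratio_def)
    ultimately have "x / peak_ratio = q0" by (rule ratio_eq_peak_imp)
    then show ?thesis using peak_ratio_ge by (simp add: field_simps)
  qed simp
next
  fix x assume "x \<in> {0, q0 * peak_ratio}"
  moreover have "majority_prob m q0 = q0 * peak_ratio"
    using peak_bounds by (simp add: majority_ratio_def)
  moreover have "q0 * peak_ratio \<le> 1"
    using q0_le_inv_peak_ratio peak_ratio_ge by (simp add: field_simps)
  ultimately show "x \<in> {x\<in>{0..1}. majority_prob m (x / peak_ratio) = x}"
    using peak_bounds peak_ratio_ge by auto
qed

lemma majority_prob_scaled_lt_self: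
  assumes "0 \<le> a" "a < 1 / peak_ratio" "0 < x" "x \<le> 1"
  shows "majority_prob m (a * x) < x"
proof (cases "a = 0")
  case False
  have "a \<le> 1" using assms inv_peak_ratio_bounds by linarith
  then have ax: "0 < a * x" "a * x \<le> 1"
    using assms False by (auto intro: mult_le_one)
  have "a * majority_ratio m (a * x) \<le> a * peak_ratio"
    using ratio_le_peak[OF ax] assms by (simp add: mult_left_mono)
  also have "\<dots> < 1"
    using assms peak_ratio_ge by (simp add: field_simps)
  finally have "majority_ratio m (a * x) < 1 / a"
    using assms False by (simp add: field_simps)
  from mult_strict_left_mono[OF this ax(1)]
  have "(a * x) * majority_ratio m (a * x) < (a * x) * (1 / a)" .
  then show ?thesis using ax False assms(3) by (simp add: majority_ratio_def)
qed (use assms in simp)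

lemma fixpts_below_p_star:
  assumes "0 \<le> p" "p < 1 - 1 / peak_ratio"
  obtains x1 x2 c where "fixpts p (2*m+1) = {0, x1, x2}" "0 < x1" "x1 < x2" "x2 \<le> 1"
    "1/2 < c" "c < x2" "\<And>x. c < x \<Longrightarrow> x < x2 \<Longrightarrow> x < F_pk p (2*m+1) x"
proof -
  have a: "1 / peak_ratio < 1 - p" "1 - p \<le> 1" using assms by auto
  have p: "p < 1" using a inv_peak_ratio_bounds by linarith
  obtain x1 x2 where fix_eq: "{x\<in>{0..1}. majority_prob m ((1 - p) * x) = x} = {0, x1, x2}"
      and x12: "0 < x1" "x1 < x2" "q0 / (1 - p) < x2" "x2 \<le> 1"
      and above: "\<And>x. q0 / (1 - p) < x \<Longrightarrow> x < x2 \<Longrightarrow> x < majority_prob m ((1 - p) * x)"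
    using fixpts_scaled_gt[OF a] by blast
  show ?thesis
  proof (rule that[of x1 x2 "q0 / (1 - p)"])
    show "fixpts p (2*m+1) = {0, x1, x2}"
      using fixpts_odd_eq[of p m] fix_eq assms p by simp
    have "q0 \<le> q0 / (1 - p)"
      using assms p peak_bounds by (simp add: field_simps mult_le_cancel_left1)
    then show "1/2 < q0 / (1 - p)" using peak_bounds by linarith
    fix x assume "q0 / (1 - p) < x" "x < x2"
    moreover from this have "0 \<le> x" "x \<le> 1"
      using x12 peak_bounds p divide_nonneg_pos[of q0 "1 - p"] by linarith+
    ultimately show "x < F_pk p (2*m+1) x"
      using above F_pk_eq_majority_prob[of p x m] assms p by simp
  qed (use x12 in auto)
qed

lemma card_fixpts_below_p_star:
  "0 \<le> p \<Longrightarrow> p < 1 - 1 / peak_ratio \<Longrightarrow> card (fixpts p (2*m+1)) = 3"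
  by (erule fixpts_below_p_star, assumption) auto

lemma card_fixpts_p_star: "card (fixpts (1 - 1 / peak_ratio) (2*m+1)) = 2"
proof -
  have "fixpts (1 - 1 / peak_ratio) (2*m+1) = {0, q0 * peak_ratio}"
    using fixpts_odd_eq[of "1 - 1 / peak_ratio" m] fixpts_scaled_eq peak_ratio_ge by simp
  then show ?thesis using peak_bounds peak_ratio_ge by simp
qed

lemma fixpts_above_p_star:
  assumes "1 - 1 / peak_ratio < p" "p \<le> 1"
  shows "fixpts p (2*m+1) = {0}"
proof -
  have "0 \<le> p" using assms inv_peak_ratio_bounds by linarith
  moreover have "x = 0" if "0 \<le> x" "x \<le> 1" "majority_prob m ((1 - p) * x) = x" for x
    using majority_prob_scaled_lt_self[of "1 - p" x] that assms by force
  ultimately show ?thesis using fixpts_odd_eq[of p m] assms by auto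
qed

lemma p_star_odd_eq: "p_star_odd (2*m+1) = 1 - 1 / peak_ratio"
  unfolding p_star_odd_def
proof (rule the_equality)
  show "1/9 \<le> 1 - 1 / peak_ratio \<and> 1 - 1 / peak_ratio < 1/2 \<and>
      (\<forall>p. 0 \<le> p \<and> p < 1 - 1 / peak_ratio \<longrightarrow> card (fixpts p (2*m+1)) = 3) \<and>
      card (fixpts (1 - 1 / peak_ratio) (2*m+1)) = 2 \<and>
      (\<forall>p. 1 - 1 / peak_ratio < p \<and> p \<le> 1 \<longrightarrow> fixpts p (2*m+1) = {0})"
    using peak_ratio_ge peak_ratio_lt_2 card_fixpts_below_p_star card_fixpts_p_star fixpts_above_p_star
    by (intro conjI allI impI) (simp_all add: field_simps)
next
  fix ps assume ps: "1/9 \<le> ps \<and> ps < 1/2 \<and>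
      (\<forall>p. 0 \<le> p \<and> p < ps \<longrightarrow> card (fixpts p (2*m+1)) = 3) \<and>
      card (fixpts ps (2*m+1)) = 2 \<and> (\<forall>p. ps < p \<and> p \<le> 1 \<longrightarrow> fixpts p (2*m+1) = {0})"
  show "ps = 1 - 1 / peak_ratio"
  proof (rule ccontr)
    assume "ps \<noteq> 1 - 1 / peak_ratio"
    then consider "ps < 1 - 1 / peak_ratio" | "1 - 1 / peak_ratio < ps" by linarith
    then show False
    proof cases
      case 1
      then show False using ps card_fixpts_below_p_star[of ps] by simp
    next
      case 2
      then show False using ps card_fixpts_p_star inv_peak_ratio_bounds by auto
    qed
  qed
qed

lemma above_diagonal_near_Max_fixpts:
  assumes "0 \<le> p" "p < p_star_odd (2*m+1)" "0 < \<gamma>"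
  obtains a where "1/2 < a" "a \<le> 1" "Max (fixpts p (2*m+1)) - \<gamma> \<le> a" "a < F_pk p (2*m+1) a"
proof -
  have "p < 1 - 1 / peak_ratio" using assms p_star_odd_eq by simp
  then obtain x1 x2 c where fx: "fixpts p (2*m+1) = {0, x1, x2}" "0 < x1" "x1 < x2" "x2 \<le> 1"
    and c: "1/2 < c" "c < x2" and above: "\<And>x. c < x \<Longrightarrow> x < x2 \<Longrightarrow> x < F_pk p (2*m+1) x"
    using fixpts_below_p_star[OF assms(1)] by blast
  define a where "a = max (x2 - \<gamma>) ((c + x2) / 2)"
  have a: "c < a" "a < x2"
    using c assms unfolding a_def by (simp_all add: less_max_iff_disj)
  show ?thesis
  proof (rule that)
    show "1/2 < a" "a \<le> 1" using a c fx by simp_all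
    have "Max (fixpts p (2*m+1)) = x2"
      unfolding fx(1) by (rule Max_eqI) (use fx in auto)
    then show "Max (fixpts p (2*m+1)) - \<gamma> \<le> a" by (simp add: a_def)
    show "a < F_pk p (2*m+1) a" using above a by blast
  qed
qed

lemma F_pk_below_diagonal:
  assumes "p_star_odd (2*m+1) < p" "p \<le> 1" "0 < x" "x \<le> 1"
  shows "F_pk p (2*m+1) x < x"
proof -
  have "0 \<le> p" using assms inv_peak_ratio_bounds p_star_odd_eq by linarith
  then show ?thesis
    using F_pk_eq_majority_prob[of p x m] majority_prob_scaled_lt_self[of "1 - p" x] assms p_star_odd_eq
    by simp
qed

end

lemma majority_peak_exists: "1 \<le> m \<Longrightarrow> \<exists>q0. majority_peak m q0"
  by (rule majority_ratio_unimodal[of m]) (auto simp: majority_peak_def)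

section \<open>One round of the dynamics\<close>

definition red_frac :: "(nat \<Rightarrow> nat \<Rightarrow> bool) \<Rightarrow> (nat \<Rightarrow> bool) \<Rightarrow> nat \<Rightarrow> real" where
  "red_frac E x u = real (card {v\<in>nbrs E u. \<not> x v}) / real (deg E u)"

lemma red_frac_nonneg: "0 \<le> red_frac E x u"
  by (simp add: red_frac_def)

lemma red_frac_le_1:
  assumes "finite (nbrs E u)"
  shows "red_frac E x u \<le> 1"
proof -
  have "card {v\<in>nbrs E u. \<not> x v} \<le> card (nbrs E u)"
    using assms by (intro card_mono) auto
  then show ?thesis
    unfolding red_frac_def deg_def by (cases "card (nbrs E u) = 0") (auto simp: divide_le_eq_1)
qed

lemma red_frac_all_red: "0 < deg E u \<Longrightarrow> red_frac E (\<lambda>_. False) u = 1"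
  by (simp add: red_frac_def deg_def)

lemma sum_red_indicator:
  "finite (nbrs E u) \<Longrightarrow> 0 < deg E u \<Longrightarrow>
    (\<Sum>v\<in>nbrs E u. if y v then 0 else 1 :: real) = real (deg E u) * red_frac E y u"
  by (simp add: red_frac_def sum.If_cases Int_def)

lemma sample_one_eq_bernoulli:
  assumes fin: "finite (nbrs E u)" and ne: "nbrs E u \<noteq> {}" and p: "0 \<le> p" "p \<le> 1"
  shows "sample_one E p x u = bernoulli_pmf (1 - (1 - p) * red_frac E x u)"
proof -
  let ?N = "nbrs E u"
  let ?s = "1 - (1 - p) * red_frac E x u"
  have sample: "sample_one E p x u = pmf_of_set ?N \<bind> (\<lambda>v. if x v then return_pmf True else bernoulli_pmf p)"
    unfolding sample_one_def by (intro bind_pmf_cong refl) (simp add: bind_return_pmf')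
  have "pmf (sample_one E p x u) True = (\<Sum>v\<in>?N. if x v then 1 else p) / real (card ?N)"
    unfolding sample pmf_bind_pmf_of_set[OF ne fin] using p by (intro arg_cong2[where f="(/)"] sum.cong) auto
  also have "\<dots> = (real (card ?N) - (1 - p) * real (card {v\<in>?N. \<not> x v})) / real (card ?N)"
  proof -
    have "card ?N = card {v\<in>?N. x v} + card {v\<in>?N. \<not> x v}"
      using fin by (subst card_Un_disjoint[symmetric]) (auto intro: arg_cong[where f=card])
    then show ?thesis using fin by (simp add: sum.If_cases Int_def algebra_simps)
  qed
  also have "\<dots> = ?s"
    using fin ne by (simp add: red_frac_def deg_def field_simps)
  finally have True: "pmf (sample_one E p x u) True = ?s" .
  have "0 \<le> ?s" "?s \<le> 1"
    using p red_frac_nonneg red_frac_le_1[OF fin] by (auto intro: mult_le_one)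
  show ?thesis
  proof (rule pmf_eqI)
    fix b :: bool
    show "pmf (sample_one E p x u) b = pmf (bernoulli_pmf ?s) b"
      using \<open>0 \<le> ?s\<close> \<open>?s \<le> 1\<close>
      by (cases b) (simp_all add: True pmf_False_conv_True[of "sample_one E p x u"])
  qed
qed

lemma count_B_eq_binomial:
  assumes "sample_one E p x u = bernoulli_pmf s" "0 \<le> s" "s \<le> 1"
  shows "count_B E p x u m = binomial_pmf m s"
proof (induction m)
  case 0
  then show ?case using assms by (simp add: binomial_pmf_0)
next
  case (Suc m)
  have "count_B E p x u (Suc m)
      = binomial_pmf m s \<bind> (\<lambda>c. bernoulli_pmf s \<bind> (\<lambda>b. return_pmf (if b then Suc c else c)))"
    using Suc assms(1) by simp
  also have "\<dots> = bernoulli_pmf s \<bind> (\<lambda>b. binomial_pmf m s \<bind> (\<lambda>c. return_pmf ((if b then 1 else 0) + c)))"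
    by (subst bind_commute_pmf) (intro bind_pmf_cong refl, auto)
  also have "\<dots> = binomial_pmf (Suc m) s"
    using assms by (subst binomial_pmf_Suc) auto
  finally show ?case .
qed

text \<open>In probabilistic terms: with \<open>2m+2\<close> samples and a fair coin on the tie \<open>m+1 : m+1\<close>, the
  majority has the same law as with \<open>2m+1\<close> samples.\<close>
lemma Bernstein_tail_even_tie:
  "Bernstein_tail (2*m+2) (m+2) t + Bernstein (2*m+2) (m+1) t / 2 = majority_prob m t"
proof -
  define D where "D = (\<lambda>t. Bernstein_tail (2*m+2) (m+2) t + Bernstein (2*m+2) (m+1) t / 2 - majority_prob m t)"
  have "DERIV D y :> 0" for y
  proof -
    have "(2*m+1) choose (m+1) = (2*m+1) choose m"
      using binomial_symmetric[of m "2*m+1"] by simp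
    then have "Bernstein (2*m+1) (m+1) y + Bernstein (2*m+1) m y = real ((2*m+1) choose m) * y^m * (1-y)^m"
      by (simp add: Bernstein_def del: binomial_Suc_Suc) (simp add: algebra_simps)
    moreover have "real (2*m+2) * Bernstein (2*m+1) (m+1) y
        + real (2*m+2) * (Bernstein (2*m+1) m y - Bernstein (2*m+1) (m+1) y) / 2
        = real (m+1) * (Bernstein (2*m+1) (m+1) y + Bernstein (2*m+1) m y)"
      by (simp add: field_simps)
    ultimately have "real (2*m+2) * Bernstein (2*m+1) (m+1) y
        + real (2*m+2) * (Bernstein (2*m+1) m y - Bernstein (2*m+1) (m+1) y) / 2
        = real (m+1) * real ((2*m+1) choose m) * y^m * (1-y)^m"
      by simp
    also have "\<dots> = majority_deriv m y"
      using central_binomial_identities(2)[of m] by (simp add: majority_deriv_def power_mult_distrib)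
    finally have "real (2*m+2) * Bernstein (2*m+1) (m+1) y
        + real (2*m+2) * (Bernstein (2*m+1) m y - Bernstein (2*m+1) (m+1) y) / 2 - majority_deriv m y = 0"
      by simp
    moreover have "DERIV D y :> real (2*m+2) * Bernstein (2*m+1) (m+1) y
        + real (2*m+2) * (Bernstein (2*m+1) m y - Bernstein (2*m+1) (m+1) y) / 2 - majority_deriv m y"
      unfolding D_def
      using has_real_derivative_Bernstein_tail[of "m+2" "2*m+2" y]
        has_real_derivative_Bernstein[of "m+1" "2*m+2" y] has_real_derivative_majority_prob[of m y]
      by (auto intro!: derivative_eq_intros)
    ultimately show ?thesis by simp
  qed
  then have "D t = D 0" by (intro DERIV_isconst_all) blast
  then show ?thesis by (simp add: D_def Bernstein_tail_0 Bernstein_def)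
qed

definition red_weight :: "nat \<Rightarrow> nat \<Rightarrow> real" where
  "red_weight k c = (if k < 2 * c then 0 else if 2 * c < k then 1 else 1/2)"

lemma sum_red_weight_odd: "(\<Sum>c\<le>2*m+1. Bernstein (2*m+1) c s * red_weight (2*m+1) c) = majority_prob m (1 - s)"
proof -
  have "{..2*m+1} = {..m} \<union> {m+1..2*m+1}" by auto
  then have "(\<Sum>c\<le>2*m+1. Bernstein (2*m+1) c s * red_weight (2*m+1) c) = (\<Sum>c\<le>m. Bernstein (2*m+1) c s)"
    by (simp add: sum.union_disjoint red_weight_def)
  also have "\<dots> = majority_prob m (1 - s)"
    using sum_Bernstein_atMost_reflect[of m "2*m+1" s] by (simp add: majority_prob_def)
  finally show ?thesis .
qed

lemma sum_red_weight_even: "(\<Sum>c\<le>2*m+2. Bernstein (2*m+2) c s * red_weight (2*m+2) c) = majority_prob m (1 - s)"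
proof -
  have "{..2*m+2} = {..m} \<union> ({m+1} \<union> {m+2..2*m+2})" by auto
  then have "(\<Sum>c\<le>2*m+2. Bernstein (2*m+2) c s * red_weight (2*m+2) c)
      = (\<Sum>c\<le>m. Bernstein (2*m+2) c s) + Bernstein (2*m+2) (m+1) s / 2"
    by (simp add: sum.union_disjoint red_weight_def)
  also have "(\<Sum>c\<le>m. Bernstein (2*m+2) c s) = Bernstein_tail (2*m+2) (m+2) (1 - s)"
    using sum_Bernstein_atMost_reflect[of m "2*m+2" s] by (simp add: numeral_eq_Suc)
  also have "Bernstein (2*m+2) (m+1) s = Bernstein (2*m+2) (m+1) (1 - s)"
    using Bernstein_reflect[of "m+1" "2*m+2" s] by (simp add: numeral_eq_Suc)
  finally show ?thesis by (simp only: Bernstein_tail_even_tie)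
qed

lemma pmf_node_update_red:
  assumes fin: "finite (nbrs E u)" and ne: "nbrs E u \<noteq> {}" and p: "0 \<le> p" "p \<le> 1"
    and k: "k = 2*m+1 \<or> k = 2*m+2"
  shows "pmf (node_update E k p x u) False = F_pk p (2*m+1) (red_frac E x u)"
proof -
  define s where "s = 1 - (1 - p) * red_frac E x u"
  have r: "0 \<le> red_frac E x u" "red_frac E x u \<le> 1"
    using red_frac_nonneg red_frac_le_1[OF fin] by auto
  then have s: "0 \<le> s" "s \<le> 1"
    using p unfolding s_def by (auto intro: mult_le_one)
  have "sample_one E p x u = bernoulli_pmf s"
    unfolding s_def by (rule sample_one_eq_bernoulli[OF fin ne p])
  then have "pmf (node_update E k p x u) False
      = measure_pmf.expectation (binomial_pmf k s) (\<lambda>c. pmf (if 2 * c > k then return_pmf True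
          else if 2 * c < k then return_pmf False else bernoulli_pmf (1/2)) False)"
    unfolding node_update_def pmf_bind using count_B_eq_binomial s by simp
  also have "\<dots> = (\<Sum>c\<le>k. Bernstein k c s * red_weight k c)"
    using s by (subst expectation_binomial_pmf') (auto simp: Bernstein_def red_weight_def intro!: sum.cong)
  also have "\<dots> = majority_prob m (1 - s)"
    using k sum_red_weight_odd sum_red_weight_even by auto
  also have "\<dots> = F_pk p (2*m+1) (red_frac E x u)"
    unfolding s_def using F_pk_eq_majority_prob[OF p r] by simp
  finally show ?thesis .
qed

lemma nbrs_subset: "simple_graph_on n E \<Longrightarrow> nbrs E u \<subseteq> {1..n}"
  by (auto simp: simple_graph_on_def nbrs_def)

lemma finite_nbrs: "simple_graph_on n E \<Longrightarrow> finite (nbrs E u)"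
  by (rule finite_subset[OF nbrs_subset]) auto

lemma deg_ge_min_deg: "u \<in> {1..n} \<Longrightarrow> min_deg n E \<le> deg E u"
  unfolding min_deg_def by (intro Min_le) auto

lemma expectation_em_step_red:
  assumes graph: "simple_graph_on n E" and deg_pos: "\<forall>v\<in>{1..n}. 0 < deg E v"
    and p: "0 \<le> p" "p \<le> 1" and k: "k = 2*m+1 \<or> k = 2*m+2" and v: "v \<in> {1..n}"
  shows "measure_pmf.expectation (em_step n E k p x) (\<lambda>y. if y v then 0 else 1 :: real)
       = F_pk p (2*m+1) (red_frac E x v)"
proof -
  have "measure_pmf.expectation (em_step n E k p x) (\<lambda>y. if y v then 0 else 1 :: real)
      = measure_pmf.expectation (map_pmf (\<lambda>y. y v) (em_step n E k p x)) (\<lambda>b. if b then 0 else 1 :: real)"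
    by simp
  also have "map_pmf (\<lambda>y. y v) (em_step n E k p x) = node_update E k p x v"
    unfolding em_step_def using v by (subst Pi_pmf_component) auto
  also have "measure_pmf.expectation (node_update E k p x v) (\<lambda>b. if b then 0 else 1 :: real)
      = pmf (node_update E k p x v) False"
    by (subst integral_measure_pmf[of "{False}"]) auto
  also have "\<dots> = F_pk p (2*m+1) (red_frac E x v)"
  proof -
    have "0 < deg E v" using deg_pos v by blast
    then show ?thesis
      by (intro pmf_node_update_red p k finite_nbrs[OF graph]) (auto simp: deg_def)
  qed
  finally show ?thesis .
qed

text \<open>Given the configuration \<open>x\<close>, the neighbours of \<open>u\<close> update independently, and neighbour \<open>v\<close>
  turns red with probability \<open>F_pk p (2*m+1) (red_frac E x v)\<close>; Hoeffding's inequality bounds the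
  deviation of the new red fraction around \<open>u\<close> from the average of these probabilities.\<close>
context
  fixes n :: nat and E :: "nat \<Rightarrow> nat \<Rightarrow> bool" and k m :: nat and p :: real and x :: "nat \<Rightarrow> bool"
    and u :: nat
  assumes graph: "simple_graph_on n E" and deg_pos: "\<forall>v\<in>{1..n}. 0 < deg E v"
    and p: "0 \<le> p" "p \<le> 1" and k: "k = 2*m+1 \<or> k = 2*m+2" and u: "u \<in> {1..n}"
begin

private abbreviation mean_red_count :: real where
  "mean_red_count \<equiv> (\<Sum>v\<in>nbrs E u. F_pk p (2*m+1) (red_frac E x v))"

private lemma sum_expectation_red:
  "(\<Sum>v\<in>nbrs E u. measure_pmf.expectation (em_step n E k p x) (\<lambda>y. if y v then 0 else 1 :: real))
     = mean_red_count"
  using nbrs_subset[OF graph, of u]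
  by (intro sum.cong refl expectation_em_step_red[OF graph deg_pos p k]) auto

private lemma Hoeffding_em_step:
  "Hoeffding_ineq (measure_pmf (em_step n E k p x)) (nbrs E u) (\<lambda>v y. if y v then 0 else 1)
     (\<lambda>_. 0) (\<lambda>_. 1)"
proof -
  let ?M = "measure_pmf (em_step n E k p x)"
  have states: "prob_space.indep_vars ?M (\<lambda>_. count_space UNIV) (\<lambda>v y. y v) {1..n}"
    unfolding em_step_def by (rule indep_vars_Pi_pmf) simp
  have "prob_space.indep_vars ?M (\<lambda>_. borel) (\<lambda>v y. if y v then 0 else 1 :: real) {1..n}"
    using prob_space.indep_vars_compose2[OF measure_pmf.prob_space_axioms states,
        of "\<lambda>_ b. if b then 0 else 1 :: real" "\<lambda>_. borel"]
    by simp
  then have "prob_space.indep_vars ?M (\<lambda>_. borel) (\<lambda>v y. if y v then 0 else 1 :: real) (nbrs E u)"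
    by (rule prob_space.indep_vars_subset[OF measure_pmf.prob_space_axioms _ nbrs_subset[OF graph]])
  then show ?thesis
    by unfold_locales (auto simp: finite_nbrs[OF graph])
qed

private lemma sum_red_indicator_u:
  "(\<Sum>v\<in>nbrs E u. if y v then 0 else 1 :: real) = real (deg E u) * red_frac E y u"
  using sum_red_indicator[OF finite_nbrs[OF graph]] deg_pos u by simp

private lemma deg_u_eq: "(\<Sum>v\<in>nbrs E u. (1 - 0 :: real)\<^sup>2) = real (deg E u)"
  by (simp add: deg_def)

private lemma deg_u_pos: "0 < real (deg E u)"
  using deg_pos u by simp

lemma em_step_red_frac_lower_tail:
  assumes "0 \<le> \<epsilon>"
  shows "measure_pmf.prob (em_step n E k p x) {y. red_frac E y u \<le> mean_red_count / deg E u - \<epsilon>}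
     \<le> exp (-2 * \<epsilon>\<^sup>2 * deg E u)"
proof -
  have "measure_pmf.prob (em_step n E k p x) {y. red_frac E y u \<le> mean_red_count / deg E u - \<epsilon>}
      = measure_pmf.prob (em_step n E k p x) {y\<in>space (measure_pmf (em_step n E k p x)).
          (\<Sum>v\<in>nbrs E u. if y v then 0 else 1) \<le> mean_red_count - \<epsilon> * deg E u}"
    using deg_u_pos by (intro arg_cong[where f="measure_pmf.prob _"]) (auto simp: sum_red_indicator_u field_simps)
  also have "\<dots> \<le> exp (-2 * (\<epsilon> * deg E u)\<^sup>2 / (\<Sum>v\<in>nbrs E u. (1 - 0)\<^sup>2))"
    using Hoeffding_ineq.Hoeffding_ineq_le[OF Hoeffding_em_step, of "\<epsilon> * deg E u"]
      assms deg_u_pos deg_u_eq by (simp add: sum_expectation_red)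
  also have "\<dots> = exp (-2 * \<epsilon>\<^sup>2 * deg E u)"
    using deg_u_pos by (simp add: deg_def power2_eq_square)
  finally show ?thesis .
qed

lemma em_step_red_frac_upper_tail:
  assumes "0 \<le> \<epsilon>"
  shows "measure_pmf.prob (em_step n E k p x) {y. mean_red_count / deg E u + \<epsilon> \<le> red_frac E y u}
     \<le> exp (-2 * \<epsilon>\<^sup>2 * deg E u)"
proof -
  have "measure_pmf.prob (em_step n E k p x) {y. mean_red_count / deg E u + \<epsilon> \<le> red_frac E y u}
      = measure_pmf.prob (em_step n E k p x) {y\<in>space (measure_pmf (em_step n E k p x)).
          mean_red_count + \<epsilon> * deg E u \<le> (\<Sum>v\<in>nbrs E u. if y v then 0 else 1)}"
    using deg_u_pos by (intro arg_cong[where f="measure_pmf.prob _"]) (auto simp: sum_red_indicator_u field_simps)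
  also have "\<dots> \<le> exp (-2 * (\<epsilon> * deg E u)\<^sup>2 / (\<Sum>v\<in>nbrs E u. (1 - 0)\<^sup>2))"
    using Hoeffding_ineq.Hoeffding_ineq_ge[OF Hoeffding_em_step, of "\<epsilon> * deg E u"]
      assms deg_u_pos deg_u_eq by (simp add: sum_expectation_red)
  also have "\<dots> = exp (-2 * \<epsilon>\<^sup>2 * deg E u)"
    using deg_u_pos by (simp add: deg_def power2_eq_square)
  finally show ?thesis .
qed

end

section \<open>Many rounds\<close>

lemma measure_pmf_prob_bind:
  "measure_pmf.prob (bind_pmf M f) S = measure_pmf.expectation M (\<lambda>x. measure_pmf.prob (f x) S)"
  using measurable_measure_pmf[of f] unfolding measure_pmf_bind
  by (subst measure_pmf.measure_bind[where N="count_space UNIV"]) auto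

lemma measure_pmf_prob_bex_le:
  assumes "finite I" "\<And>i. i \<in> I \<Longrightarrow> measure_pmf.prob M {x. P i x} \<le> e"
  shows "measure_pmf.prob M {x. \<exists>i\<in>I. P i x} \<le> real (card I) * e"
proof -
  have "{x. \<exists>i\<in>I. P i x} = (\<Union>i\<in>I. {x. P i x})" by auto
  then have "measure_pmf.prob M {x. \<exists>i\<in>I. P i x} \<le> (\<Sum>i\<in>I. measure_pmf.prob M {x. P i x})"
    using measure_pmf.finite_measure_subadditive_finite[of I "\<lambda>i. {x. P i x}" M] assms(1) by simp
  also have "\<dots> \<le> real (card I) * e"
    using sum_mono[of I _ "\<lambda>_. e"] assms(2) by simp
  finally show ?thesis .
qed

lemma length_em_traj: "xs \<in> set_pmf (em_traj n E k p x0 T) \<Longrightarrow> length xs = Suc T"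
  by (induction T arbitrary: xs) (auto simp: set_bind_pmf)

lemma prob_append_violates_invariant:
  assumes "length xs = Suc T" "\<forall>t\<le>T. P t (xs ! t)"
  shows "measure_pmf.prob (M \<bind> (\<lambda>y. return_pmf (xs @ [y]))) {ys. \<exists>t\<le>Suc T. \<not> P t (ys ! t)}
    = measure_pmf.prob M {y. \<not> P (Suc T) y}"
proof -
  have "(\<lambda>y. xs @ [y]) -` {ys. \<exists>t\<le>Suc T. \<not> P t (ys ! t)} = {y. \<not> P (Suc T) y}"
    using assms by (auto simp: nth_append le_Suc_eq)
  then show ?thesis by (simp add: map_pmf_def[symmetric])
qed

lemma em_traj_invariant_violation_le:
  assumes P0: "P 0 x0"
    and step: "\<And>t x. P t x \<Longrightarrow> measure_pmf.prob (em_step n E k p x) {y. \<not> P (Suc t) y} \<le> \<eta>"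
    and eta: "0 \<le> \<eta>"
  shows "measure_pmf.prob (em_traj n E k p x0 T) {xs. \<exists>t\<le>T. \<not> P t (xs ! t)} \<le> real T * \<eta>"
proof (induction T)
  case 0
  then show ?case using P0 by simp
next
  case (Suc T)
  let ?M = "em_traj n E k p x0 T"
  let ?bad = "\<lambda>T. {xs. \<exists>t\<le>T. \<not> P t (xs ! t)}"
  let ?ext = "\<lambda>xs. em_step n E k p (last xs) \<bind> (\<lambda>y. return_pmf (xs @ [y]))"
  have ext: "measure_pmf.prob (?ext xs) (?bad (Suc T)) \<le> indicator (?bad T) xs + \<eta>"
    if "xs \<in> set_pmf ?M" for xs
  proof (cases "xs \<in> ?bad T")
    case True
    then have "indicator (?bad T) xs = (1 :: real)" by simp
    moreover have "measure_pmf.prob (?ext xs) (?bad (Suc T)) \<le> 1"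
      by (rule measure_pmf.prob_le_1)
    ultimately show ?thesis using eta by linarith
  next
    case False
    have len: "length xs = Suc T" using length_em_traj[OF that] .
    then have "last xs = xs ! T" by (metis diff_Suc_1 last_conv_nth list.size(3) nat.distinct(1))
    then have "measure_pmf.prob (?ext xs) (?bad (Suc T))
        = measure_pmf.prob (em_step n E k p (xs ! T)) {y. \<not> P (Suc T) y}"
      using prob_append_violates_invariant[OF len] False by simp
    also have "\<dots> \<le> \<eta>" using False by (intro step) auto
    finally show ?thesis using False by simp
  qed
  have "measure_pmf.prob (em_traj n E k p x0 (Suc T)) (?bad (Suc T))
      = measure_pmf.expectation ?M (\<lambda>xs. measure_pmf.prob (?ext xs) (?bad (Suc T)))"
    by (simp add: measure_pmf_prob_bind)
  also have "\<dots> \<le> measure_pmf.expectation ?M (\<lambda>xs. indicator (?bad T) xs + \<eta>)"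
  proof (rule integral_mono_AE)
    show "integrable ?M (\<lambda>xs. measure_pmf.prob (?ext xs) (?bad (Suc T)))"
      by (intro measure_pmf.integrable_const_bound[where B=1]) auto
    show "integrable ?M (\<lambda>xs. indicator (?bad T) xs + \<eta>)"
      using eta by (intro measure_pmf.integrable_const_bound[where B="1 + \<eta>"]) (auto simp: indicator_def)
  qed (use ext in \<open>blast intro: AE_pmfI\<close>)
  also have "\<dots> = measure_pmf.prob ?M (?bad T) + \<eta>"
    by (subst Bochner_Integration.integral_add)
       (auto intro!: measure_pmf.integrable_const_bound[where B=1] simp: indicator_def)
  also have "\<dots> \<le> real (Suc T) * \<eta>" using Suc.IH by (simp add: algebra_simps)
  finally show ?case .
qed

lemma em_traj_invariant_prob_ge:
  assumes "P 0 x0"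
    and "\<And>t x. P t x \<Longrightarrow> measure_pmf.prob (em_step n E k p x) {y. \<not> P (Suc t) y} \<le> \<eta>"
    and "0 \<le> \<eta>"
  shows "1 - real T * \<eta> \<le> measure_pmf.prob (em_traj n E k p x0 T) {xs. \<forall>t\<le>T. P t (xs ! t)}"
proof -
  have "{xs. \<forall>t\<le>T. P t (xs ! t)} = space (measure_pmf (em_traj n E k p x0 T)) - {xs. \<exists>t\<le>T. \<not> P t (xs ! t)}"
    by auto
  then show ?thesis
    using measure_pmf.prob_compl[of "{xs. \<exists>t\<le>T. \<not> P t (xs ! t)}" "em_traj n E k p x0 T"]
      em_traj_invariant_violation_le[OF assms, of T]
    by simp
qed

lemma exp_neg_deg_le_min_deg:
  fixes \<epsilon> :: real
  shows "u \<in> {1..n} \<Longrightarrow> exp (-2 * \<epsilon>\<^sup>2 * deg E u) \<le> exp (-2 * \<epsilon>\<^sup>2 * min_deg n E)"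
  using deg_ge_min_deg[of u n E] by (simp add: mult_left_mono)

context
  fixes n :: nat and E :: "nat \<Rightarrow> nat \<Rightarrow> bool" and k m :: nat and p :: real
  assumes graph: "simple_graph_on n E" and deg_pos: "\<forall>v\<in>{1..n}. 0 < deg E v"
    and p: "0 \<le> p" "p \<le> 1" and k: "k = 2*m+1 \<or> k = 2*m+2"
begin

lemma em_step_red_frac_drop_prob:
  assumes a: "0 \<le> a" and above: "\<forall>v\<in>{1..n}. a \<le> red_frac E x v" and \<epsilon>: "0 \<le> \<epsilon>"
  shows "measure_pmf.prob (em_step n E k p x) {y. \<exists>u\<in>{1..n}. red_frac E y u \<le> F_pk p (2*m+1) a - \<epsilon>}
     \<le> real n * exp (-2 * \<epsilon>\<^sup>2 * min_deg n E)"
proof -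
  have per_node: "measure_pmf.prob (em_step n E k p x) {y. red_frac E y u \<le> F_pk p (2*m+1) a - \<epsilon>}
      \<le> exp (-2 * \<epsilon>\<^sup>2 * min_deg n E)" if u: "u \<in> {1..n}" for u
  proof -
    let ?mean = "(\<Sum>v\<in>nbrs E u. F_pk p (2*m+1) (red_frac E x v)) / deg E u"
    have "F_pk p (2*m+1) a \<le> F_pk p (2*m+1) (red_frac E x v)" if "v \<in> nbrs E u" for v
      using that nbrs_subset[OF graph] above red_frac_le_1[OF finite_nbrs[OF graph]]
      by (intro F_pk_mono p a) auto
    then have "real (deg E u) * F_pk p (2*m+1) a \<le> (\<Sum>v\<in>nbrs E u. F_pk p (2*m+1) (red_frac E x v))"
      using sum_mono[of "nbrs E u" "\<lambda>_. F_pk p (2*m+1) a"] by (simp add: deg_def)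
    then have "F_pk p (2*m+1) a \<le> ?mean"
      using deg_pos u by (simp add: field_simps)
    then have "measure_pmf.prob (em_step n E k p x) {y. red_frac E y u \<le> F_pk p (2*m+1) a - \<epsilon>}
        \<le> measure_pmf.prob (em_step n E k p x) {y. red_frac E y u \<le> ?mean - \<epsilon>}"
      by (intro measure_pmf.finite_measure_mono) auto
    also have "\<dots> \<le> exp (-2 * \<epsilon>\<^sup>2 * deg E u)"
      by (rule em_step_red_frac_lower_tail[OF graph deg_pos p k u \<epsilon>])
    also have "\<dots> \<le> exp (-2 * \<epsilon>\<^sup>2 * min_deg n E)"
      using u by (rule exp_neg_deg_le_min_deg)
    finally show ?thesis .
  qed
  then show ?thesis
    using measure_pmf_prob_bex_le[of "{1..n}" "em_step n E k p x"
        "\<lambda>u y. red_frac E y u \<le> F_pk p (2*m+1) a - \<epsilon>", OF _ per_node]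
    by simp
qed

lemma em_step_red_frac_rise_prob:
  assumes b: "b \<le> 1" and below: "\<forall>v\<in>{1..n}. red_frac E x v \<le> b" and \<epsilon>: "0 \<le> \<epsilon>"
  shows "measure_pmf.prob (em_step n E k p x) {y. \<exists>u\<in>{1..n}. F_pk p (2*m+1) b + \<epsilon> \<le> red_frac E y u}
     \<le> real n * exp (-2 * \<epsilon>\<^sup>2 * min_deg n E)"
proof -
  have per_node: "measure_pmf.prob (em_step n E k p x) {y. F_pk p (2*m+1) b + \<epsilon> \<le> red_frac E y u}
      \<le> exp (-2 * \<epsilon>\<^sup>2 * min_deg n E)" if u: "u \<in> {1..n}" for u
  proof -
    let ?mean = "(\<Sum>v\<in>nbrs E u. F_pk p (2*m+1) (red_frac E x v)) / deg E u"
    have "F_pk p (2*m+1) (red_frac E x v) \<le> F_pk p (2*m+1) b" if "v \<in> nbrs E u" for v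
      using that nbrs_subset[OF graph] below red_frac_nonneg
      by (intro F_pk_mono p b) auto
    then have "(\<Sum>v\<in>nbrs E u. F_pk p (2*m+1) (red_frac E x v)) \<le> real (deg E u) * F_pk p (2*m+1) b"
      using sum_mono[of "nbrs E u" _ "\<lambda>_. F_pk p (2*m+1) b"] by (simp add: deg_def)
    then have "?mean \<le> F_pk p (2*m+1) b"
      using deg_pos u by (simp add: field_simps)
    then have "measure_pmf.prob (em_step n E k p x) {y. F_pk p (2*m+1) b + \<epsilon> \<le> red_frac E y u}
        \<le> measure_pmf.prob (em_step n E k p x) {y. ?mean + \<epsilon> \<le> red_frac E y u}"
      by (intro measure_pmf.finite_measure_mono) auto
    also have "\<dots> \<le> exp (-2 * \<epsilon>\<^sup>2 * deg E u)"
      by (rule em_step_red_frac_upper_tail[OF graph deg_pos p k u \<epsilon>])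
    also have "\<dots> \<le> exp (-2 * \<epsilon>\<^sup>2 * min_deg n E)"
      using u by (rule exp_neg_deg_le_min_deg)
    finally show ?thesis .
  qed
  then show ?thesis
    using measure_pmf_prob_bex_le[of "{1..n}" "em_step n E k p x"
        "\<lambda>u y. F_pk p (2*m+1) b + \<epsilon> \<le> red_frac E y u", OF _ per_node]
    by simp
qed

lemma em_traj_red_frac_stays_above:
  assumes a: "0 \<le> a" and gain: "a < F_pk p (2*m+1) a"
  shows "1 - real N * (real n * exp (-2 * ((F_pk p (2*m+1) a - a) / 2)\<^sup>2 * min_deg n E))
      \<le> measure_pmf.prob (em_traj n E k p (\<lambda>_. False) N) {xs. \<forall>t\<le>N. \<forall>u\<in>{1..n}. a \<le> red_frac E (xs ! t) u}"
proof (rule em_traj_invariant_prob_ge[where P="\<lambda>_ y. \<forall>u\<in>{1..n}. a \<le> red_frac E y u"])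
  show "\<forall>u\<in>{1..n}. a \<le> red_frac E (\<lambda>_. False) u"
    using deg_pos gain F_pk_le_1[of p "2*m+1" a] by (simp add: red_frac_all_red)
next
  fix t x assume "\<forall>u\<in>{1..n}. a \<le> red_frac E x u"
  moreover have "a \<le> F_pk p (2*m+1) a - (F_pk p (2*m+1) a - a) / 2"
    using gain by (simp add: field_simps)
  then have "{y. \<not> (\<forall>u\<in>{1..n}. a \<le> red_frac E y u)}
      \<subseteq> {y. \<exists>u\<in>{1..n}. red_frac E y u \<le> F_pk p (2*m+1) a - (F_pk p (2*m+1) a - a) / 2}"
    by (force simp: not_le)
  ultimately show "measure_pmf.prob (em_step n E k p x) {y. \<not> (\<forall>u\<in>{1..n}. a \<le> red_frac E y u)}
      \<le> real n * exp (-2 * ((F_pk p (2*m+1) a - a) / 2)\<^sup>2 * min_deg n E)"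
    using gain a by (intro order.trans[OF measure_pmf.finite_measure_mono em_step_red_frac_drop_prob]) auto
qed simp

lemma em_traj_red_frac_below_schedule:
  assumes b: "\<And>t. b t \<le> 1" "b 0 = 1"
    and step: "\<And>t. F_pk p (2*m+1) (b t) + \<epsilon> \<le> b (Suc t)" and \<epsilon>: "0 \<le> \<epsilon>"
  shows "1 - real N * (real n * exp (-2 * \<epsilon>\<^sup>2 * min_deg n E))
      \<le> measure_pmf.prob (em_traj n E k p (\<lambda>_. False) N) {xs. \<forall>t\<le>N. \<forall>u\<in>{1..n}. red_frac E (xs ! t) u \<le> b t}"
proof (rule em_traj_invariant_prob_ge[where P="\<lambda>t y. \<forall>u\<in>{1..n}. red_frac E y u \<le> b t"])
  show "\<forall>u\<in>{1..n}. red_frac E (\<lambda>_. False) u \<le> b 0"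
    using deg_pos b by (simp add: red_frac_all_red)
next
  fix t x assume "\<forall>u\<in>{1..n}. red_frac E x u \<le> b t"
  moreover have "{y. \<not> (\<forall>u\<in>{1..n}. red_frac E y u \<le> b (Suc t))}
      \<subseteq> {y. \<exists>u\<in>{1..n}. F_pk p (2*m+1) (b t) + \<epsilon> \<le> red_frac E y u}"
    using step[of t] by force
  ultimately show "measure_pmf.prob (em_step n E k p x) {y. \<not> (\<forall>u\<in>{1..n}. red_frac E y u \<le> b (Suc t))}
      \<le> real n * exp (-2 * \<epsilon>\<^sup>2 * min_deg n E)"
    using b \<epsilon> by (intro order.trans[OF measure_pmf.finite_measure_mono em_step_red_frac_rise_prob]) auto
qed simp

end

section \<open>Volumes and asymptotics\<close>

lemma vol_red_set_eq:
  assumes graph: "simple_graph_on n E"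
  shows "vol E (red_set n y) = (\<Sum>u\<in>{1..n}. real (deg E u) * red_frac E y u)"
proof -
  let ?V = "{1..n}"
  have nbrs_eq: "nbrs E u = {v\<in>?V. E u v}" for u
    using nbrs_subset[OF graph, of u] by (auto simp: nbrs_def)
  have sym: "E u v = E v u" for u v
    using graph unfolding simple_graph_on_def by blast
  have "vol E (red_set n y) = (\<Sum>v\<in>?V. if \<not> y v then real (deg E v) else 0)"
    unfolding vol_def red_set_def by (rule sum.inter_filter) simp
  also have "\<dots> = (\<Sum>v\<in>?V. \<Sum>u\<in>?V. if E u v \<and> \<not> y v then 1 else 0)"
    by (intro sum.cong refl) (simp add: deg_def nbrs_eq sym sum.If_cases Int_def)
  also have "\<dots> = (\<Sum>u\<in>?V. \<Sum>v\<in>?V. if E u v \<and> \<not> y v then 1 else 0)"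
    by (rule sum.swap)
  also have "\<dots> = (\<Sum>u\<in>?V. real (card {v\<in>nbrs E u. \<not> y v}))"
    by (intro sum.cong refl) (auto simp: nbrs_eq sum.If_cases Int_def intro!: arg_cong[where f=card])
  also have "\<dots> = (\<Sum>u\<in>?V. real (deg E u) * red_frac E y u)"
  proof (intro sum.cong refl)
    fix u
    have "card {v\<in>nbrs E u. \<not> y v} \<le> deg E u"
      unfolding deg_def by (rule card_mono[OF finite_nbrs[OF graph]]) auto
    then show "real (card {v\<in>nbrs E u. \<not> y v}) = real (deg E u) * red_frac E y u"
      by (cases "deg E u = 0") (simp_all add: red_frac_def)
  qed
  finally show ?thesis .
qed

lemma vol_pos: "1 \<le> n \<Longrightarrow> \<forall>v\<in>{1..n}. 0 < deg E v \<Longrightarrow> 0 < vol E {1..n}"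
  unfolding vol_def by (intro sum_pos) auto

lemma red_vol_frac_ge:
  assumes "simple_graph_on n E" "0 < vol E {1..n}" "\<forall>u\<in>{1..n}. a \<le> red_frac E y u"
  shows "a \<le> vol E (red_set n y) / vol E {1..n}"
proof -
  have "a * vol E {1..n} = (\<Sum>u\<in>{1..n}. real (deg E u) * a)"
    by (simp add: vol_def sum_distrib_left mult.commute)
  also have "\<dots> \<le> vol E (red_set n y)"
    unfolding vol_red_set_eq[OF assms(1)] using assms(3) by (intro sum_mono mult_left_mono) auto
  finally show ?thesis using assms(2) by (simp add: field_simps)
qed

lemma red_vol_frac_le:
  assumes "simple_graph_on n E" "0 < vol E {1..n}" "\<forall>u\<in>{1..n}. red_frac E y u \<le> b"
  shows "vol E (red_set n y) / vol E {1..n} \<le> b"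
proof -
  have "vol E (red_set n y) \<le> (\<Sum>u\<in>{1..n}. real (deg E u) * b)"
    unfolding vol_red_set_eq[OF assms(1)] using assms(3) by (intro sum_mono mult_left_mono) auto
  also have "\<dots> = b * vol E {1..n}"
    by (simp add: vol_def sum_distrib_left mult.commute)
  finally show ?thesis using assms(2) by (simp add: field_simps)
qed

lemma blue_vol_frac_eq:
  assumes "0 < vol E {1..n}"
  shows "vol E (blue_set n y) / vol E {1..n} = 1 - vol E (red_set n y) / vol E {1..n}"
proof -
  have "{1..n} = blue_set n y \<union> red_set n y" "blue_set n y \<inter> red_set n y = {}"
    unfolding blue_set_def red_set_def by auto
  then have "vol E {1..n} = vol E (blue_set n y) + vol E (red_set n y)"
    unfolding vol_def by (metis finite_atLeastAtMost finite_Un sum.union_disjoint)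
  then show ?thesis using assms by (simp add: field_simps)
qed

lemma eventually_deg_pos:
  assumes "(\<lambda>n. real (min_deg n (E n))) \<in> \<omega>(\<lambda>n. ln (real n))"
  shows "eventually (\<lambda>n. \<forall>v\<in>{1..n}. 0 < deg (E n) v) sequentially"
  using smallomegaD[OF assms, of 1] eventually_ge_at_top[of "4::nat"]
proof eventually_elim
  case (elim n)
  have "exp 1 < real n" using exp_le elim by linarith
  then have "1 < ln (real n)" using elim by (simp add: ln_less_cancel_iff[of "exp 1", symmetric])
  then have "0 < min_deg n (E n)" using elim by simp
  then show ?case using deg_ge_min_deg[of _ n "E n"] by (auto intro: order.strict_trans2)
qed

lemma eventually_vol_pos:
  assumes "(\<lambda>n. real (min_deg n (E n))) \<in> \<omega>(\<lambda>n. ln (real n))"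
  shows "eventually (\<lambda>n. 0 < vol (E n) {1..n}) sequentially"
  using eventually_deg_pos[OF assms] eventually_ge_at_top[of "1::nat"]
  by eventually_elim (rule vol_pos)

lemma union_bound_vanishes:
  fixes D N :: "nat \<Rightarrow> real"
  assumes D: "D \<in> \<omega>(\<lambda>n. ln (real n))" "\<And>n. 0 \<le> D n" and c: "0 < c"
    and N: "eventually (\<lambda>n. 0 \<le> N n \<and> N n \<le> real n powr K) sequentially"
  shows "(\<lambda>n. N n * (real n * exp (- c * D n))) \<longlonglongrightarrow> 0"
proof (rule tendsto_sandwich[of "\<lambda>_. 0" _ _ "\<lambda>n. inverse (real n)"])
  show "eventually (\<lambda>n. 0 \<le> N n * (real n * exp (- c * D n))) sequentially"
    using N by eventually_elim simp
  show "eventually (\<lambda>n. N n * (real n * exp (- c * D n)) \<le> inverse (real n)) sequentially"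
    using smallomegaD[OF D(1), of "(K + 2) / c"] N eventually_ge_at_top[of "1::nat"]
  proof eventually_elim
    case (elim n)
    then have n: "0 < real n" by simp
    have "(K + 2) * ln (real n) \<le> c * D n"
      using elim D(2)[of n] c by (simp add: field_simps)
    then have "exp (- c * D n) \<le> exp (- ((K + 2) * ln (real n)))"
      by simp
    also have "\<dots> = real n powr (- (K + 2))"
      using n by (simp add: powr_def algebra_simps)
    finally have "exp (- c * D n) \<le> real n powr (- (K + 2))" .
    then have "N n * (real n * exp (- c * D n)) \<le> real n powr K * (real n powr 1 * real n powr (- (K + 2)))"
      using elim n by (intro mult_mono) auto
    also have "\<dots> = real n powr (K + (1 + - (K + 2)))"
      by (simp only: powr_add)
    also have "\<dots> = inverse (real n)"
      using n by (simp add: powr_minus)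
    finally show ?case .
  qed
qed (auto intro: lim_inverse_n)

lemma tendsto_1_lower_bound:
  fixes f e :: "nat \<Rightarrow> real"
  assumes "eventually (\<lambda>n. 1 - e n \<le> f n) sequentially" "\<And>n. f n \<le> 1" "e \<longlonglongrightarrow> 0"
  shows "f \<longlonglongrightarrow> 1"
  using assms tendsto_diff[OF tendsto_const assms(3), of 1]
  by (intro tendsto_sandwich[of "\<lambda>n. 1 - e n" f _ "\<lambda>_. 1"]) auto

lemma prob_tendsto_1_mono:
  assumes "(\<lambda>n. measure_pmf.prob (M n) (A n)) \<longlonglongrightarrow> 1"
    and "eventually (\<lambda>n. A n \<subseteq> B n) sequentially"
  shows "(\<lambda>n. measure_pmf.prob (M n) (B n)) \<longlonglongrightarrow> 1"
proof (rule tendsto_sandwich[OF _ _ assms(1) tendsto_const])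
  show "eventually (\<lambda>n. measure_pmf.prob (M n) (A n) \<le> measure_pmf.prob (M n) (B n)) sequentially"
    using assms(2) by eventually_elim (rule measure_pmf.finite_measure_mono, auto)
qed simp

context
  fixes E :: "nat \<Rightarrow> nat \<Rightarrow> nat \<Rightarrow> bool" and k m :: nat and p :: real
  assumes graphs: "\<And>n. simple_graph_on n (E n)"
    and mindeg: "(\<lambda>n. real (min_deg n (E n))) \<in> \<omega>(\<lambda>n. ln (real n))"
    and p: "0 \<le> p" "p \<le> 1" and k: "k = 2*m+1 \<or> k = 2*m+2"
begin

lemma red_vol_frac_stays_above_whp:
  assumes a: "0 \<le> a" and gain: "a < F_pk p (2*m+1) a" and K: "0 < K"
  shows "(\<lambda>n. measure_pmf.prob (em_traj n (E n) k p (\<lambda>_. False) (nat \<lfloor>real n powr K\<rfloor>))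
      {xs. \<forall>t \<le> nat \<lfloor>real n powr K\<rfloor>. a \<le> vol (E n) (red_set n (xs ! t)) / vol (E n) {1..n}}) \<longlonglongrightarrow> 1"
proof (rule prob_tendsto_1_mono)
  define \<epsilon> where "\<epsilon> = (F_pk p (2*m+1) a - a) / 2"
  have \<epsilon>: "0 < \<epsilon>" using gain by (simp add: \<epsilon>_def)
  show "(\<lambda>n. measure_pmf.prob (em_traj n (E n) k p (\<lambda>_. False) (nat \<lfloor>real n powr K\<rfloor>))
      {xs. \<forall>t \<le> nat \<lfloor>real n powr K\<rfloor>. \<forall>u\<in>{1..n}. a \<le> red_frac (E n) (xs ! t) u}) \<longlonglongrightarrow> 1"
  proof (rule tendsto_1_lower_bound)
    show "eventually (\<lambda>n. 1 - real (nat \<lfloor>real n powr K\<rfloor>) * (real n * exp (-2 * \<epsilon>\<^sup>2 * min_deg n (E n)))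
        \<le> measure_pmf.prob (em_traj n (E n) k p (\<lambda>_. False) (nat \<lfloor>real n powr K\<rfloor>))
            {xs. \<forall>t \<le> nat \<lfloor>real n powr K\<rfloor>. \<forall>u\<in>{1..n}. a \<le> red_frac (E n) (xs ! t) u}) sequentially"
      using eventually_deg_pos[OF mindeg]
      by eventually_elim (unfold \<epsilon>_def, rule em_traj_red_frac_stays_above[OF graphs _ p k a gain])
    have "(\<lambda>n. real (nat \<lfloor>real n powr K\<rfloor>) * (real n * exp (- (2 * \<epsilon>\<^sup>2) * min_deg n (E n)))) \<longlonglongrightarrow> 0"
      using mindeg \<epsilon> by (intro union_bound_vanishes[where K=K]) auto
    then show "(\<lambda>n. real (nat \<lfloor>real n powr K\<rfloor>) * (real n * exp (-2 * \<epsilon>\<^sup>2 * min_deg n (E n)))) \<longlonglongrightarrow> 0"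
      by simp
  qed simp
  show "eventually (\<lambda>n.
      {xs. \<forall>t \<le> nat \<lfloor>real n powr K\<rfloor>. \<forall>u\<in>{1..n}. a \<le> red_frac (E n) (xs ! t) u}
    \<subseteq> {xs. \<forall>t \<le> nat \<lfloor>real n powr K\<rfloor>. a \<le> vol (E n) (red_set n (xs ! t)) / vol (E n) {1..n}}) sequentially"
    using eventually_vol_pos[OF mindeg] by eventually_elim (use red_vol_frac_ge[OF graphs] in blast)
qed

lemma red_vol_frac_below_schedule_whp:
  assumes b: "\<And>t. b t \<le> 1" "b 0 = 1"
    and step: "\<And>t. F_pk p (2*m+1) (b t) + \<epsilon> \<le> b (Suc t)" and \<epsilon>: "0 < \<epsilon>"
  shows "(\<lambda>n. measure_pmf.prob (em_traj n (E n) k p (\<lambda>_. False) T)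
      {xs. \<forall>t \<le> T. vol (E n) (red_set n (xs ! t)) / vol (E n) {1..n} \<le> b t}) \<longlonglongrightarrow> 1"
proof (rule prob_tendsto_1_mono)
  show "(\<lambda>n. measure_pmf.prob (em_traj n (E n) k p (\<lambda>_. False) T)
      {xs. \<forall>t \<le> T. \<forall>u\<in>{1..n}. red_frac (E n) (xs ! t) u \<le> b t}) \<longlonglongrightarrow> 1"
  proof (rule tendsto_1_lower_bound)
    show "eventually (\<lambda>n. 1 - real T * (real n * exp (- (2 * \<epsilon>\<^sup>2) * min_deg n (E n)))
        \<le> measure_pmf.prob (em_traj n (E n) k p (\<lambda>_. False) T)
            {xs. \<forall>t \<le> T. \<forall>u\<in>{1..n}. red_frac (E n) (xs ! t) u \<le> b t}) sequentially"
      using eventually_deg_pos[OF mindeg]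
      by eventually_elim (use em_traj_red_frac_below_schedule[OF graphs _ p k b step] \<epsilon> in simp)
    have "eventually (\<lambda>n. real T \<le> real n powr 1) sequentially"
      using eventually_ge_at_top[of T] by eventually_elim simp
    then show "(\<lambda>n. real T * (real n * exp (- (2 * \<epsilon>\<^sup>2) * min_deg n (E n)))) \<longlonglongrightarrow> 0"
      using mindeg \<epsilon> by (intro union_bound_vanishes[where K=1]) auto
  qed simp
  show "eventually (\<lambda>n.
      {xs. \<forall>t \<le> T. \<forall>u\<in>{1..n}. red_frac (E n) (xs ! t) u \<le> b t}
    \<subseteq> {xs. \<forall>t \<le> T. vol (E n) (red_set n (xs ! t)) / vol (E n) {1..n} \<le> b t}) sequentially"
    using eventually_vol_pos[OF mindeg] by eventually_elim (use red_vol_frac_le[OF graphs] in blast)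
qed

end

section \<open>Slow and fast disruption\<close>

lemma uniform_gap_below_diagonal:
  fixes f :: "real \<Rightarrow> real"
  assumes "continuous_on {a..b} f" "a \<le> b" "\<And>x. a \<le> x \<Longrightarrow> x \<le> b \<Longrightarrow> f x < x"
  obtains \<mu> where "0 < \<mu>" "\<And>x. a \<le> x \<Longrightarrow> x \<le> b \<Longrightarrow> f x \<le> x - \<mu>"
proof -
  have "continuous_on {a..b} (\<lambda>x. x - f x)"
    by (intro continuous_intros assms(1))
  with assms(2) obtain x0 where "x0 \<in> {a..b}" "\<forall>y\<in>{a..b}. x0 - f x0 \<le> y - f y"
    using continuous_attains_inf[OF compact_Icc, of a b "\<lambda>x. x - f x"] by auto
  then show ?thesis
    using assms(3)[of x0] by (intro that[of "x0 - f x0"]) force+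
qed

text \<open>A deterministic upper envelope for the red fraction: it drops by \<open>\<mu>/2\<close> per round (leaving
  room \<open>\<mu>/2\<close> for fluctuations) until it passes below \<open>1/2\<close>.\<close>
lemma descending_schedule:
  fixes f :: "real \<Rightarrow> real"
  assumes mono: "\<And>x y. 0 \<le> x \<Longrightarrow> x \<le> y \<Longrightarrow> y \<le> 1 \<Longrightarrow> f x \<le> f y" and nonneg: "0 \<le> f (1/2)"
    and gap: "\<And>x. 1/2 \<le> x \<Longrightarrow> x \<le> 1 \<Longrightarrow> f x \<le> x - \<mu>" and \<mu>: "0 < \<mu>"
  obtains b :: "nat \<Rightarrow> real" and T where "b 0 = 1" "\<And>t. b t \<le> 1"
    "\<And>t. f (b t) + \<mu>/2 \<le> b (Suc t)" "b T < 1/2"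
proof -
  have \<mu>_le: "\<mu> \<le> 1/2" using gap[of "1/2"] nonneg by simp
  define b where "b t = max (1 - real t * \<mu> / 2) (1/2 - \<mu>/2)" for t
  have b: "0 \<le> b t" "b t \<le> 1" for t
    using \<mu> \<mu>_le by (auto simp: b_def max_def)
  have "f (b t) + \<mu>/2 \<le> b (Suc t)" for t
  proof (cases "1/2 \<le> b t")
    case True
    then have "f (b t) \<le> b t - \<mu>" using gap b by blast
    moreover have "b t - \<mu>/2 \<le> b (Suc t)"
      using \<mu> by (auto simp: b_def max_def algebra_simps)
    ultimately show ?thesis by linarith
  next
    case False
    then have "f (b t) \<le> f (1/2)" using b by (intro mono) auto
    also have "\<dots> \<le> 1/2 - \<mu>" using gap[of "1/2"] by simp
    finally show ?thesis by (simp add: b_def)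
  qed
  moreover define T where "T = nat \<lceil>1 / \<mu>\<rceil> + 1"
  have "1 < real T * \<mu>"
  proof -
    have "1 / \<mu> < real T" unfolding T_def by linarith
    then show ?thesis using \<mu> by (simp add: field_simps)
  qed
  then have "b T < 1/2" unfolding b_def max_less_iff_conj using \<mu> by linarith
  moreover have "b 0 = 1" using \<mu> by (simp add: b_def)
  ultimately show ?thesis using that b(2) by blast
qed

lemma sample_size_cases:
  assumes "3 \<le> k"
  obtains m where "1 \<le> m" "k = 2*m+1 \<or> k = 2*m+2" "p_star k = p_star_odd (2*m+1)"
    "\<And>p. phi_plus p k = Max (fixpts p (2*m+1))"
proof (cases "odd k")
  case True
  then obtain j where "k = 2 * j + 1" by (auto elim: oddE)
  with assms True show ?thesis
    using that[of j] by (simp add: p_star_def phi_plus_def)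
next
  case False
  then obtain j where "k = 2 * j" by (auto elim: evenE)
  with assms have "k = 2 * (j - 1) + 2" "k - 1 = 2 * (j - 1) + 1" "1 \<le> j - 1" by auto
  with False show ?thesis
    using that[of "j - 1"] by (simp add: p_star_def phi_plus_def)
qed

context
  fixes E :: "nat \<Rightarrow> nat \<Rightarrow> nat \<Rightarrow> bool" and k m :: nat and p :: real
  assumes graphs: "\<And>n. simple_graph_on n (E n)"
    and mindeg: "(\<lambda>n. real (min_deg n (E n))) \<in> \<omega>(\<lambda>n. ln (real n))"
    and p: "0 \<le> p" "p \<le> 1" and k: "k = 2*m+1 \<or> k = 2*m+2" and m: "1 \<le> m"
begin

lemma slow_disruption_red_volume:
  assumes "p < p_star_odd (2*m+1)" "0 < \<gamma>" "0 < K"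
  shows "(\<lambda>n. measure_pmf.prob (em_traj n (E n) k p (\<lambda>_. False) (nat \<lfloor>real n powr K\<rfloor>))
      {xs. \<forall>t \<le> nat \<lfloor>real n powr K\<rfloor>.
         vol (E n) (red_set n (xs ! t)) / vol (E n) {1..n} \<ge> Max (fixpts p (2*m+1)) - \<gamma>}) \<longlonglongrightarrow> 1"
proof -
  obtain q0 where peak: "majority_peak m q0" using majority_peak_exists[OF m] by blast
  then obtain a where a: "1/2 < a" "Max (fixpts p (2*m+1)) - \<gamma> \<le> a" "a < F_pk p (2*m+1) a"
    using majority_peak.above_diagonal_near_Max_fixpts[OF peak p(1) assms(1,2)] by blast
  have "(\<lambda>n. measure_pmf.prob (em_traj n (E n) k p (\<lambda>_. False) (nat \<lfloor>real n powr K\<rfloor>))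
      {xs. \<forall>t \<le> nat \<lfloor>real n powr K\<rfloor>. a \<le> vol (E n) (red_set n (xs ! t)) / vol (E n) {1..n}}) \<longlonglongrightarrow> 1"
    using a assms(3) by (intro red_vol_frac_stays_above_whp[OF graphs mindeg p k]) auto
  then show ?thesis
    by (rule prob_tendsto_1_mono) (use a(2) in \<open>auto intro!: always_eventually\<close>)
qed

lemma slow_disruption_no_blue_majority:
  assumes "p < p_star_odd (2*m+1)" "0 < K"
  shows "(\<lambda>n. measure_pmf.prob (em_traj n (E n) k p (\<lambda>_. False) (nat \<lfloor>real n powr K\<rfloor>))
      {xs. \<forall>t \<le> nat \<lfloor>real n powr K\<rfloor>.
         \<not> (vol (E n) (blue_set n (xs ! t)) / vol (E n) {1..n} > 1/2)}) \<longlonglongrightarrow> 1"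
proof -
  obtain q0 where peak: "majority_peak m q0" using majority_peak_exists[OF m] by blast
  then obtain a where a: "1/2 < a" "a < F_pk p (2*m+1) a"
    using majority_peak.above_diagonal_near_Max_fixpts[OF peak p(1) assms(1) zero_less_one] by blast
  have "(\<lambda>n. measure_pmf.prob (em_traj n (E n) k p (\<lambda>_. False) (nat \<lfloor>real n powr K\<rfloor>))
      {xs. \<forall>t \<le> nat \<lfloor>real n powr K\<rfloor>. a \<le> vol (E n) (red_set n (xs ! t)) / vol (E n) {1..n}}) \<longlonglongrightarrow> 1"
    using a assms(2) by (intro red_vol_frac_stays_above_whp[OF graphs mindeg p k]) auto
  then show ?thesis
  proof (rule prob_tendsto_1_mono)
    show "eventually (\<lambda>n.
        {xs. \<forall>t \<le> nat \<lfloor>real n powr K\<rfloor>. a \<le> vol (E n) (red_set n (xs ! t)) / vol (E n) {1..n}}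
      \<subseteq> {xs. \<forall>t \<le> nat \<lfloor>real n powr K\<rfloor>. \<not> (vol (E n) (blue_set n (xs ! t)) / vol (E n) {1..n} > 1/2)})
      sequentially"
      using eventually_vol_pos[OF mindeg]
    proof eventually_elim
      case (elim n)
      show ?case
      proof (intro subsetI CollectI allI impI)
        fix xs t
        assume "xs \<in> {xs. \<forall>t \<le> nat \<lfloor>real n powr K\<rfloor>. a \<le> vol (E n) (red_set n (xs ! t)) / vol (E n) {1..n}}"
          and "t \<le> nat \<lfloor>real n powr K\<rfloor>"
        then have "a \<le> vol (E n) (red_set n (xs ! t)) / vol (E n) {1..n}" by blast
        then show "\<not> vol (E n) (blue_set n (xs ! t)) / vol (E n) {1..n} > 1/2"
          unfolding blue_vol_frac_eq[OF elim] using a(1) by linarith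
      qed
    qed
  qed
qed

lemma fast_disruption:
  assumes "p_star_odd (2*m+1) < p"
  shows "\<exists>T. (\<lambda>n. measure_pmf.prob (em_traj n (E n) k p (\<lambda>_. False) T)
      {xs. \<exists>t < T. vol (E n) (blue_set n (xs ! t)) / vol (E n) {1..n} > 1/2}) \<longlonglongrightarrow> 1"
proof -
  obtain q0 where peak: "majority_peak m q0" using majority_peak_exists[OF m] by blast
  then have below: "F_pk p (2*m+1) x < x" if "1/2 \<le> x" "x \<le> 1" for x
    using majority_peak.F_pk_below_diagonal[OF peak assms p(2)] that by simp
  have "continuous_on {1/2..1} (F_pk p (2*m+1))"
    by (rule continuous_on_subset[OF continuous_on_F_pk[OF p]]) auto
  then obtain \<mu> where \<mu>: "0 < \<mu>" "\<And>x. 1/2 \<le> x \<Longrightarrow> x \<le> 1 \<Longrightarrow> F_pk p (2*m+1) x \<le> x - \<mu>"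
    using uniform_gap_below_diagonal[of "1/2" 1 "F_pk p (2*m+1)"] below by auto
  obtain b T where b: "b 0 = 1" "\<And>t. b t \<le> 1" "\<And>t. F_pk p (2*m+1) (b t) + \<mu>/2 \<le> b (Suc t)" "b T < 1/2"
    using descending_schedule[OF F_pk_mono[OF p] F_pk_nonneg \<mu>(2) \<mu>(1)] by blast
  have "(\<lambda>n. measure_pmf.prob (em_traj n (E n) k p (\<lambda>_. False) (Suc T))
      {xs. \<forall>t \<le> Suc T. vol (E n) (red_set n (xs ! t)) / vol (E n) {1..n} \<le> b t}) \<longlonglongrightarrow> 1"
    using \<mu> by (intro red_vol_frac_below_schedule_whp[OF graphs mindeg p k b(2,1,3)]) auto
  then have "(\<lambda>n. measure_pmf.prob (em_traj n (E n) k p (\<lambda>_. False) (Suc T))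
      {xs. \<exists>t < Suc T. vol (E n) (blue_set n (xs ! t)) / vol (E n) {1..n} > 1/2}) \<longlonglongrightarrow> 1"
  proof (rule prob_tendsto_1_mono)
    show "eventually (\<lambda>n.
        {xs. \<forall>t \<le> Suc T. vol (E n) (red_set n (xs ! t)) / vol (E n) {1..n} \<le> b t}
      \<subseteq> {xs. \<exists>t < Suc T. vol (E n) (blue_set n (xs ! t)) / vol (E n) {1..n} > 1/2}) sequentially"
      using eventually_vol_pos[OF mindeg]
    proof eventually_elim
      case (elim n)
      show ?case
      proof
        fix xs assume "xs \<in> {xs. \<forall>t \<le> Suc T. vol (E n) (red_set n (xs ! t)) / vol (E n) {1..n} \<le> b t}"
        then have "vol (E n) (red_set n (xs ! T)) / vol (E n) {1..n} \<le> b T" by simp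
        then have "vol (E n) (blue_set n (xs ! T)) / vol (E n) {1..n} > 1/2"
          unfolding blue_vol_frac_eq[OF elim] using b(4) by linarith
        then show "xs \<in> {xs. \<exists>t < Suc T. vol (E n) (blue_set n (xs ! t)) / vol (E n) {1..n} > 1/2}"
          by blast
      qed
    qed
  qed
  then show ?thesis by blast
qed

end

theorem theorem5p2:
  fixes E :: "nat \<Rightarrow> nat \<Rightarrow> nat \<Rightarrow> bool" and p :: real and k :: nat
  assumes graphs: "\<And>n. simple_graph_on n (E n)"
    and mindeg: "(\<lambda>n. real (min_deg n (E n))) \<in> \<omega>(\<lambda>n. ln (real n))"
    and p: "0 \<le> p" "p \<le> 1"
    and k: "k \<ge> 3"
  shows
   "(p < p_star k \<longrightarrow>
      (\<forall>\<gamma>::real. \<forall>K::real. \<gamma> > 0 \<and> K > 0 \<longrightarrow>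
         (\<lambda>n. measure_pmf.prob (em_traj n (E n) k p (\<lambda>_. False) (nat \<lfloor>real n powr K\<rfloor>))
            {xs. \<forall>t \<le> nat \<lfloor>real n powr K\<rfloor>.
                 vol (E n) (red_set n (xs ! t)) / vol (E n) {1..n} \<ge> phi_plus p k - \<gamma>})
         \<longlonglongrightarrow> 1) \<and>
      (\<forall>K::real. K > 0 \<longrightarrow>
         (\<lambda>n. measure_pmf.prob (em_traj n (E n) k p (\<lambda>_. False) (nat \<lfloor>real n powr K\<rfloor>))
            {xs. \<forall>t \<le> nat \<lfloor>real n powr K\<rfloor>.
                 \<not> (vol (E n) (blue_set n (xs ! t)) / vol (E n) {1..n} > 1/2)})
         \<longlonglongrightarrow> 1)) \<and>
    (p > p_star k \<longrightarrow>
      (\<exists>T::nat.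
         (\<lambda>n. measure_pmf.prob (em_traj n (E n) k p (\<lambda>_. False) T)
            {xs. \<exists>t < T. vol (E n) (blue_set n (xs ! t)) / vol (E n) {1..n} > 1/2})
         \<longlonglongrightarrow> 1))"
proof -
  obtain m where m: "1 \<le> m" "k = 2*m+1 \<or> k = 2*m+2" "p_star k = p_star_odd (2*m+1)"
    "\<And>p. phi_plus p k = Max (fixpts p (2*m+1))"
    using sample_size_cases[OF k] by blast
  show ?thesis
    unfolding m(3,4)
    using slow_disruption_red_volume[OF graphs mindeg p m(2,1)]
      slow_disruption_no_blue_majority[OF graphs mindeg p m(2,1)]
      fast_disruption[OF graphs mindeg p m(2,1)]
    by blast
qed

end
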